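(* Let $(\Lambda,d)$ be a $k$-graph and let $\overline{\Lambda}$ be the extension of $\Lambda$ described in the context (objects $\Lambda^0\sqcup\widetilde{V_\Lambda}$, morphisms $\Lambda\sqcup\widetilde{P_\Lambda}$, with the range, source, composition and identities given there). Then $\overline{\Lambda}$ is a category.
   Context: A $k$-graph $(\Lambda,d)$ is a countable category with a degree functor $d:\Lambda\to\mathbb{N}^k$ satisfying unique factorization (if $d(\lambda)=m+n$ there are unique $\mu,\nu$ with $\lambda=\mu\nu$, $d(\mu)=m$, $d(\nu)=n$); $\Lambda^0$ vertices, $r,s$ range/source, $v\Lambda^n=\{\lambda:r(\lambda)=v,d(\lambda)=n\}$; $e_i$ standard basis, $\le$ coordinatewise ($m\not\le n$ means not $m\le n$), $\vee,\wedge$ coordinatewise max/min. For $m\in(\mathbb{N}\cup\{\infty\})^k$, $\Omega_{k,m}$ has objects $\{p\in\mathbb{N}^k:p\le m\}$, morphisms $(p,q)$, $p\le q\le m$, $r(p,q)=p$, $s(p,q)=q$, $d(p,q)=q-p$. A graph morphism $x:\Omega_{k,m}\to\Lambda$ is a degree-preserving functor; $d(x)=m$, $x(a,b)=x((a,b))$, $x(a)=x(a,a)$. It is a boundary path if there is $n_x\in\mathbb{N}^k$, $n_x\le d(x)$, with $x(p)\Lambda^{e_i}=\emptyset$ whenever $p\in\mathbb{N}^k$, $n_x\le p\le d(x)$, $p_i=d(x)_i$; $\Lambda^{\le\infty}$ is the set of boundary paths. $\sigma^px(a,b)=x(a+p,b+p)$ on $\Omega_{k,d(x)-p}$ ($p\in\mathbb{N}^k$,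 $p\le d(x)$); for $\lambda$ with $s(\lambda)=x(0)$, $\lambda x$ is the graph morphism on $\Omega_{k,d(\lambda)+d(x)}$ with $(\lambda x)(0,d(\lambda))=\lambda$, $(\lambda x)(0,p)=\lambda x(0,p-d(\lambda))$. Let $V_\Lambda=\{(x;m):x\in\Lambda^{\le\infty},m\in\mathbb{N}^k,m\not\le d(x)\}$ with equivalence $(x;m)\approx(y;p)$ iff $x(m\wedge d(x))=y(p\wedge d(y))$ and $m-m\wedge d(x)=p-p\wedge d(y)$; classes $[x;m]$, quotient $\widetilde{V_\Lambda}$. Let $P_\Lambda=\{(x;(m,n)):x\in\Lambda^{\le\infty},m,n\in\mathbb{N}^k,m\le n,n\not\le d(x)\}$ with equivalence $(x;(m,n))\sim(y;(p,q))$ iff $x(m\wedge d(x),n\wedge d(x))=y(p\wedge d(y),q\wedge d(y))$, $m-m\wedge d(x)=p-p\wedge d(y)$, $n-m=q-p$; classes $[x;(m,n)]$, quotient $\widetilde{P_\Lambda}$. The extension $\overline{\Lambda}$ has objects $\Lambda^0\sqcup\widetilde{V_\Lambda}$ and morphisms $\Lambda\sqcup\widetilde{P_\Lambda}$; on $\Lambda$ range, source, composition and identities are those of $\Lambda$; $\overline r([x;(m,n)])=x(m)$ if $m\le d(x)$ and $=[x;m]$ otherwise; $\overline s([x;(m,n)])=[x;n]$; the identity at $[x;m]$ is $[x;(m,m)]$; for $\lambda\in\Lambda$ with $s(\lambda)=\overline r([x;(m,n)])$, $\lambda[x;(m,n)]=[\lambda\sigma^mx;(0,d(\lambda)+n-m)]$;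 for $\overline s([x;(m,n)])=\overline r([y;(p,q)])$, $[x;(m,n)][y;(p,q)]=[z;(m,n+q-p)]$ with $z=x(0,n\wedge d(x))\sigma^{p\wedge d(y)}y$. (These maps are well defined on equivalence classes.) The degree $\overline d$ equals $d$ on $\Lambda$ and $\overline d([x;(m,n)])=n-m$. *)

theory Defs
  imports Main "HOL-Library.Function_Algebras" "HOL-Library.Extended_Nat"
    "HOL-Library.Countable_Set"
begin

section \<open>Categories (composition written in path order: cmp f g needs s f = r g)\<close>

definition category ::
  "'o set \<Rightarrow> 'a set \<Rightarrow> ('a \<Rightarrow> 'o) \<Rightarrow> ('a \<Rightarrow> 'o) \<Rightarrow> ('o \<Rightarrow> 'a) \<Rightarrow> ('a \<Rightarrow> 'a \<Rightarrow> 'a) \<Rightarrow> bool"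
where
  "category Ob Mor r s idm cmp \<longleftrightarrow>
     (\<forall>f\<in>Mor. r f \<in> Ob \<and> s f \<in> Ob) \<and>
     (\<forall>a\<in>Ob. idm a \<in> Mor \<and> r (idm a) = a \<and> s (idm a) = a) \<and>
     (\<forall>f\<in>Mor. \<forall>g\<in>Mor. s f = r g \<longrightarrow>
         cmp f g \<in> Mor \<and> r (cmp f g) = r f \<and> s (cmp f g) = s g) \<and>
     (\<forall>f\<in>Mor. \<forall>g\<in>Mor. \<forall>h\<in>Mor. s f = r g \<and> s g = r h \<longrightarrow>
         cmp (cmp f g) h = cmp f (cmp g h)) \<and>
     (\<forall>f\<in>Mor. cmp (idm (r f)) f = f \<and> cmp f (idm (s f)) = f)"

section \<open>k-graphs; k = CARD('k), degrees in 'k \<Rightarrow> nat (pointwise order)\<close>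

definition ebasis :: "'k \<Rightarrow> ('k \<Rightarrow> nat)" where
  "ebasis i = (\<lambda>j. if j = i then 1 else 0)"

definition kgraph ::
  "'v set \<Rightarrow> 'm set \<Rightarrow> ('m \<Rightarrow> 'v) \<Rightarrow> ('m \<Rightarrow> 'v) \<Rightarrow> ('v \<Rightarrow> 'm) \<Rightarrow> ('m \<Rightarrow> 'm \<Rightarrow> 'm)
    \<Rightarrow> ('m \<Rightarrow> ('k::finite \<Rightarrow> nat)) \<Rightarrow> bool"
where
  "kgraph V L r s idm cmp d \<longleftrightarrow>
     category V L r s idm cmp \<and> countable V \<and> countable L \<and>
     (\<forall>v\<in>V. d (idm v) = 0) \<and>
     (\<forall>f\<in>L. \<forall>g\<in>L. s f = r g \<longrightarrow> d (cmp f g) = d f + d g) \<and>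
     (\<forall>l\<in>L. \<forall>m n. d l = m + n \<longrightarrow>
        (\<exists>!(f, g). f \<in> L \<and> g \<in> L \<and> s f = r g \<and> l = cmp f g \<and> d f = m \<and> d g = n))"

text \<open>A graph morphism x : \<Omega>_{k,m} \<rightarrow> \<Lambda> is represented by the pair (m, f) with
  f p q = x(p,q) for p \<le> q \<le> m, and f p q = undefined otherwise (canonical form).\<close>

type_synonym ('k, 'm) gpath = "('k \<Rightarrow> enat) \<times> (('k \<Rightarrow> nat) \<Rightarrow> ('k \<Rightarrow> nat) \<Rightarrow> 'm)"

definition leq_en :: "('k \<Rightarrow> nat) \<Rightarrow> ('k \<Rightarrow> enat) \<Rightarrow> bool" where
  "leq_en p m \<longleftrightarrow> (\<forall>i. enat (p i) \<le> m i)"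

definition in_Omega :: "('k \<Rightarrow> enat) \<Rightarrow> ('k \<Rightarrow> nat) \<Rightarrow> ('k \<Rightarrow> nat) \<Rightarrow> bool" where
  "in_Omega m p q \<longleftrightarrow> p \<le> q \<and> leq_en q m"

definition graph_morphism ::
  "'v set \<Rightarrow> 'm set \<Rightarrow> ('m \<Rightarrow> 'v) \<Rightarrow> ('m \<Rightarrow> 'v) \<Rightarrow> ('v \<Rightarrow> 'm) \<Rightarrow> ('m \<Rightarrow> 'm \<Rightarrow> 'm)
    \<Rightarrow> ('m \<Rightarrow> ('k::finite \<Rightarrow> nat)) \<Rightarrow> ('k, 'm) gpath \<Rightarrow> bool"
where
  "graph_morphism V L r s idm cmp d x \<longleftrightarrow>
     (\<forall>p q. \<not> in_Omega (fst x) p q \<longrightarrow> snd x p q = undefined) \<and>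
     (\<forall>p q. in_Omega (fst x) p q \<longrightarrow>
        snd x p q \<in> L \<and> d (snd x p q) = q - p \<and>
        r (snd x p q) = r (snd x p p) \<and> s (snd x p q) = r (snd x q q)) \<and>
     (\<forall>p. leq_en p (fst x) \<longrightarrow> snd x p p = idm (r (snd x p p))) \<and>
     (\<forall>p q t. p \<le> q \<and> in_Omega (fst x) q t \<longrightarrow>
        cmp (snd x p q) (snd x q t) = snd x p t)"

definition gvert :: "('m \<Rightarrow> 'v) \<Rightarrow> ('k, 'm) gpath \<Rightarrow> ('k \<Rightarrow> nat) \<Rightarrow> 'v" where
  "gvert r x p = r (snd x p p)"

definition boundary_paths ::
  "'v set \<Rightarrow> 'm set \<Rightarrow> ('m \<Rightarrow> 'v) \<Rightarrow> ('m \<Rightarrow> 'v) \<Rightarrow> ('v \<Rightarrow> 'm) \<Rightarrow> ('m \<Rightarrow> 'm \<Rightarrow> 'm)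
    \<Rightarrow> ('m \<Rightarrow> ('k::finite \<Rightarrow> nat)) \<Rightarrow> ('k, 'm) gpath set"
where
  "boundary_paths V L r s idm cmp d =
     {x. graph_morphism V L r s idm cmp d x \<and>
         (\<exists>nx. leq_en nx (fst x) \<and>
            (\<forall>p i. nx \<le> p \<and> leq_en p (fst x) \<and> enat (p i) = fst x i \<longrightarrow>
               \<not> (\<exists>l\<in>L. r l = gvert r x p \<and> d l = ebasis i)))}"

definition meet_en :: "('k \<Rightarrow> nat) \<Rightarrow> ('k \<Rightarrow> enat) \<Rightarrow> ('k \<Rightarrow> nat)" where
  "meet_en m D = (\<lambda>i. if enat (m i) \<le> D i then m i else the_enat (D i))"

definition shift :: "('k \<Rightarrow> nat) \<Rightarrow> ('k, 'm) gpath \<Rightarrow> ('k, 'm) gpath" where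
  "shift p x = (let D = (\<lambda>i. fst x i - enat (p i)) in
     (D, \<lambda>a b. if in_Omega D a b then snd x (a + p) (b + p) else undefined))"

definition seg ::
  "'m set \<Rightarrow> ('m \<Rightarrow> 'v) \<Rightarrow> ('m \<Rightarrow> 'v) \<Rightarrow> ('m \<Rightarrow> 'm \<Rightarrow> 'm) \<Rightarrow> ('m \<Rightarrow> ('k \<Rightarrow> nat))
     \<Rightarrow> 'm \<Rightarrow> ('k \<Rightarrow> nat) \<Rightarrow> ('k \<Rightarrow> nat) \<Rightarrow> 'm"
where
  "seg L r s cmp d w p q = (THE nu. \<exists>mu rho. mu \<in> L \<and> nu \<in> L \<and> rho \<in> L \<and>
      s mu = r nu \<and> s nu = r rho \<and> w = cmp (cmp mu nu) rho \<and> d mu = p \<and> d nu = q - p)"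

text \<open>\<lambda> x for s(\<lambda>) = x(0): (\<lambda>x)(0, q') = \<lambda> x(0, q' - d \<lambda>) for q' \<ge> d \<lambda>, and the
  remaining values are the corresponding factors (graph morphism determined by these).\<close>
definition prepend ::
  "'m set \<Rightarrow> ('m \<Rightarrow> 'v) \<Rightarrow> ('m \<Rightarrow> 'v) \<Rightarrow> ('m \<Rightarrow> 'm \<Rightarrow> 'm) \<Rightarrow> ('m \<Rightarrow> ('k \<Rightarrow> nat))
     \<Rightarrow> 'm \<Rightarrow> ('k, 'm) gpath \<Rightarrow> ('k, 'm) gpath"
where
  "prepend L r s cmp d l x = (let D = (\<lambda>i. enat (d l i) + fst x i) in
     (D, \<lambda>p q. if in_Omega D p q
                then seg L r s cmp d (cmp l (snd x 0 (sup q (d l) - d l))) p q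
                else undefined))"

definition Vset :: "('k, 'm) gpath set \<Rightarrow> (('k, 'm) gpath \<times> ('k \<Rightarrow> nat)) set" where
  "Vset B = {(x, m). x \<in> B \<and> \<not> leq_en m (fst x)}"

definition Vrel :: "('m \<Rightarrow> 'v) \<Rightarrow> ('k, 'm) gpath set
     \<Rightarrow> ((('k, 'm) gpath \<times> ('k \<Rightarrow> nat)) \<times> (('k, 'm) gpath \<times> ('k \<Rightarrow> nat))) set" where
  "Vrel r B = {((x, m), (y, p)). (x, m) \<in> Vset B \<and> (y, p) \<in> Vset B \<and>
      gvert r x (meet_en m (fst x)) = gvert r y (meet_en p (fst y)) \<and>
      m - meet_en m (fst x) = p - meet_en p (fst y)}"

definition Pset :: "('k, 'm) gpath set
     \<Rightarrow> (('k, 'm) gpath \<times> (('k \<Rightarrow> nat) \<times> ('k \<Rightarrow> nat))) set" where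
  "Pset B = {(x, (m, n)). x \<in> B \<and> m \<le> n \<and> \<not> leq_en n (fst x)}"

definition Prel :: "('k, 'm) gpath set
     \<Rightarrow> ((('k, 'm) gpath \<times> (('k \<Rightarrow> nat) \<times> ('k \<Rightarrow> nat)))
        \<times> (('k, 'm) gpath \<times> (('k \<Rightarrow> nat) \<times> ('k \<Rightarrow> nat)))) set" where
  "Prel B = {((x, (m, n)), (y, (p, q))). (x, (m, n)) \<in> Pset B \<and> (y, (p, q)) \<in> Pset B \<and>
      snd x (meet_en m (fst x)) (meet_en n (fst x)) = snd y (meet_en p (fst y)) (meet_en q (fst y)) \<and>
      m - meet_en m (fst x) = p - meet_en p (fst y) \<and>
      n - m = q - p}"

context
  fixes V :: "'v set" and L :: "'m set" and r s :: "'m \<Rightarrow> 'v" and idm :: "'v \<Rightarrow> 'm"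
    and cmp :: "'m \<Rightarrow> 'm \<Rightarrow> 'm" and d :: "'m \<Rightarrow> ('k::finite \<Rightarrow> nat)"
begin

abbreviation "BP \<equiv> boundary_paths V L r s idm cmp d"

definition ext_obj :: "('v + (('k, 'm) gpath \<times> ('k \<Rightarrow> nat)) set) set" where
  "ext_obj = V <+> (Vset BP // Vrel r BP)"

definition ext_mor ::
  "('m + (('k, 'm) gpath \<times> (('k \<Rightarrow> nat) \<times> ('k \<Rightarrow> nat))) set) set" where
  "ext_mor = L <+> (Pset BP // Prel BP)"

definition vclass where "vclass e = Vrel r BP `` {e}"
definition pclass where "pclass e = Prel BP `` {e}"

definition ext_r where
  "ext_r f = (case f of Inl l \<Rightarrow> Inl (r l)
     | Inr C \<Rightarrow> (let (x, (m, n)) = (SOME e. e \<in> C) in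
                 if leq_en m (fst x) then Inl (gvert r x m) else Inr (vclass (x, m))))"

definition ext_s where
  "ext_s f = (case f of Inl l \<Rightarrow> Inl (s l)
     | Inr C \<Rightarrow> (let (x, (m, n)) = (SOME e. e \<in> C) in Inr (vclass (x, n))))"

definition ext_id where
  "ext_id a = (case a of Inl v \<Rightarrow> Inl (idm v)
     | Inr C \<Rightarrow> (let (x, m) = (SOME e. e \<in> C) in Inr (pclass (x, (m, m)))))"

definition ext_comp where
  "ext_comp f g = (case (f, g) of
       (Inl l, Inl l') \<Rightarrow> Inl (cmp l l')
     | (Inl l, Inr C) \<Rightarrow> (let (x, (m, n)) = (SOME e. e \<in> C) in
          Inr (pclass (prepend L r s cmp d l (shift m x), (0, d l + n - m))))
     | (Inr C, Inr D) \<Rightarrow> (let (x, (m, n)) = (SOME e. e \<in> C); (y, (p, q)) = (SOME e. e \<in> D) in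
          Inr (pclass (prepend L r s cmp d (snd x 0 (meet_en n (fst x)))
                         (shift (meet_en p (fst y)) y), (m, n + q - p))))
     | (Inr C, Inl l) \<Rightarrow> undefined)"

end

end

theory Submission
  imports Defs
begin

text \<open>
  The class of \<open>(x; (m, n))\<close> is determined by the triple \<open>(\<alpha>, a, n - m)\<close> with
  \<open>\<alpha> = x(m \<and> d x, n \<and> d x)\<close> and \<open>a = m - m \<and> d x\<close>, and the class of \<open>(x; m)\<close> by the pair
  \<open>(x(m \<and> d x), m - m \<and> d x)\<close>; a morphism \<open>\<lambda>\<close> of \<open>\<Lambda>\<close> is given the triple \<open>(\<lambda>, 0, d \<lambda>)\<close> and a
  vertex \<open>v\<close> the pair \<open>(v, 0)\<close>. These coordinates are injective, and in them the structure of
  \<open>\<Lambda>-bar\<close> reads \<open>r(\<alpha>, a, n) = (r \<alpha>, a)\<close>, \<open>s(\<alpha>, a, n) = (s \<alpha>, a + n - d \<alpha>)\<close>,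
  \<open>id(v, b) = (id\<^sub>v, b, 0)\<close> and \<open>(\<alpha>, a, n)(\<beta>, b, n') = (\<alpha>\<beta>, a, n + n')\<close>. These formulas define a
  category directly from the category axioms of \<open>\<Lambda>\<close>, and a structure embedded into a category
  compatibly with all operations is itself a category.

  The work lies in computing the coordinates of composites: shifting a boundary path and
  prepending a morphism to it give boundary paths, unique factorisation identifies the segments
  of the prepended path, and the meets with its degree are computed coordinatewise.
\<close>

lemma add_diff_inverse_fun: "(p::'a \<Rightarrow> nat) \<le> q \<Longrightarrow> p + (q - p) = q"
  by (simp add: le_fun_def fun_eq_iff)

lemma diff_add_inverse_fun: "(p::'a \<Rightarrow> nat) \<le> q \<Longrightarrow> q - p + p = q"
  by (simp add: le_fun_def fun_eq_iff)

lemma diff_add_diff_fun: "(p::'a \<Rightarrow> nat) \<le> q \<Longrightarrow> q \<le> t \<Longrightarrow> (q - p) + (t - q) = t - p"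
  by (simp add: le_fun_def fun_eq_iff)

lemma add_diff_assoc_fun: "(p::'a \<Rightarrow> nat) \<le> q \<Longrightarrow> e + q - p = e + (q - p)"
  by (simp add: le_fun_def fun_eq_iff)

lemma le_add_diff_of_le_fun:
  assumes "(m::'a \<Rightarrow> nat) \<le> n" "p \<le> q"
  shows "m \<le> n + q - p"
proof (rule le_funI)
  fix j
  show "m j \<le> (n + q - p) j"
    using le_funD[OF assms(1), of j] le_funD[OF assms(2), of j] by simp
qed

lemma add_diff_diff_fun:
  assumes "(m::'a \<Rightarrow> nat) \<le> n" "p \<le> q"
  shows "n + q - p - m = (n - m) + (q - p)"
proof (rule ext)
  fix j
  show "(n + q - p - m) j = ((n - m) + (q - p)) j"
    using le_funD[OF assms(1), of j] le_funD[OF assms(2), of j] by simp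
qed

lemma le_add_self_fun: "(p::'a \<Rightarrow> nat) \<le> p + q"
  by (simp add: le_fun_def)

lemma le_add_diff_fun: "(q::'a \<Rightarrow> nat) \<le> p + (q - p)"
  by (auto simp: le_fun_def)

lemma Inl_in_Plus_iff [simp]: "Inl a \<in> A <+> B \<longleftrightarrow> a \<in> A"
  by auto

lemma Inr_in_Plus_iff [simp]: "Inr b \<in> A <+> B \<longleftrightarrow> b \<in> B"
  by auto

locale small_category =
  fixes Ob :: "'o set" and Mor :: "'a set" and r s :: "'a \<Rightarrow> 'o" and idm :: "'o \<Rightarrow> 'a"
    and cmp :: "'a \<Rightarrow> 'a \<Rightarrow> 'a"
  assumes category: "category Ob Mor r s idm cmp"
begin

lemma r_in_Ob: "f \<in> Mor \<Longrightarrow> r f \<in> Ob"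
  using category by (simp add: category_def)

lemma s_in_Ob: "f \<in> Mor \<Longrightarrow> s f \<in> Ob"
  using category by (simp add: category_def)

lemma idm_in_Mor: "a \<in> Ob \<Longrightarrow> idm a \<in> Mor"
  using category by (simp add: category_def)

lemma r_idm: "a \<in> Ob \<Longrightarrow> r (idm a) = a"
  using category by (simp add: category_def)

lemma s_idm: "a \<in> Ob \<Longrightarrow> s (idm a) = a"
  using category by (simp add: category_def)

lemma cmp_in_Mor: "f \<in> Mor \<Longrightarrow> g \<in> Mor \<Longrightarrow> s f = r g \<Longrightarrow> cmp f g \<in> Mor"
  using category by (simp add: category_def)

lemma r_cmp: "f \<in> Mor \<Longrightarrow> g \<in> Mor \<Longrightarrow> s f = r g \<Longrightarrow> r (cmp f g) = r f"
  using category by (simp add: category_def)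

lemma s_cmp: "f \<in> Mor \<Longrightarrow> g \<in> Mor \<Longrightarrow> s f = r g \<Longrightarrow> s (cmp f g) = s g"
  using category by (simp add: category_def)

lemma cmp_assoc:
  "f \<in> Mor \<Longrightarrow> g \<in> Mor \<Longrightarrow> h \<in> Mor \<Longrightarrow> s f = r g \<Longrightarrow> s g = r h \<Longrightarrow>
    cmp (cmp f g) h = cmp f (cmp g h)"
  using category unfolding category_def by blast

lemma cmp_idm_left: "f \<in> Mor \<Longrightarrow> cmp (idm (r f)) f = f"
  using category by (simp add: category_def)

lemma cmp_idm_right: "f \<in> Mor \<Longrightarrow> cmp f (idm (s f)) = f"
  using category by (simp add: category_def)

end

text \<open>The hypothesis on composition tests composability in the target, where it can be computed.\<close>

locale category_embedding = small_category Ob Mor r s idm cmp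
  for Ob :: "'o set" and Mor :: "'a set" and r s :: "'a \<Rightarrow> 'o" and idm :: "'o \<Rightarrow> 'a"
    and cmp :: "'a \<Rightarrow> 'a \<Rightarrow> 'a" +
  fixes \<Psi> :: "'o' \<Rightarrow> 'o" and \<Phi> :: "'a' \<Rightarrow> 'a"
    and Ob' :: "'o' set" and Mor' :: "'a' set" and r' s' :: "'a' \<Rightarrow> 'o'" and idm' :: "'o' \<Rightarrow> 'a'"
    and cmp' :: "'a' \<Rightarrow> 'a' \<Rightarrow> 'a'"
  assumes inj_obj: "inj_on \<Psi> Ob'" and inj_mor: "inj_on \<Phi> Mor'"
    and obj_into: "a \<in> Ob' \<Longrightarrow> \<Psi> a \<in> Ob" and mor_into: "f \<in> Mor' \<Longrightarrow> \<Phi> f \<in> Mor"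
    and r_hom: "f \<in> Mor' \<Longrightarrow> r' f \<in> Ob' \<and> \<Psi> (r' f) = r (\<Phi> f)"
    and s_hom: "f \<in> Mor' \<Longrightarrow> s' f \<in> Ob' \<and> \<Psi> (s' f) = s (\<Phi> f)"
    and idm_hom: "a \<in> Ob' \<Longrightarrow> idm' a \<in> Mor' \<and> \<Phi> (idm' a) = idm (\<Psi> a)"
    and cmp_hom: "f \<in> Mor' \<Longrightarrow> g \<in> Mor' \<Longrightarrow> s (\<Phi> f) = r (\<Phi> g) \<Longrightarrow>
       cmp' f g \<in> Mor' \<and> \<Phi> (cmp' f g) = cmp (\<Phi> f) (\<Phi> g)"
begin

lemma composable_image: "f \<in> Mor' \<Longrightarrow> g \<in> Mor' \<Longrightarrow> s' f = r' g \<Longrightarrow> s (\<Phi> f) = r (\<Phi> g)"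
  using r_hom s_hom by metis

lemma cmp_in_Mor': "f \<in> Mor' \<Longrightarrow> g \<in> Mor' \<Longrightarrow> s' f = r' g \<Longrightarrow> cmp' f g \<in> Mor'"
  using cmp_hom composable_image by blast

lemma \<Phi>_cmp: "f \<in> Mor' \<Longrightarrow> g \<in> Mor' \<Longrightarrow> s' f = r' g \<Longrightarrow> \<Phi> (cmp' f g) = cmp (\<Phi> f) (\<Phi> g)"
  using cmp_hom composable_image by blast

lemma idm_rs':
  assumes a: "a \<in> Ob'"
  shows "r' (idm' a) = a \<and> s' (idm' a) = a"
proof -
  have "\<Psi> (r' (idm' a)) = \<Psi> a" "\<Psi> (s' (idm' a)) = \<Psi> a"
    using r_hom s_hom idm_hom[OF a] r_idm[OF obj_into[OF a]] s_idm[OF obj_into[OF a]] by simp_all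
  then show ?thesis
    using inj_onD[OF inj_obj] r_hom s_hom idm_hom a by blast
qed

lemma cmp_rs':
  assumes fg: "f \<in> Mor'" "g \<in> Mor'" "s' f = r' g"
  shows "r' (cmp' f g) = r' f \<and> s' (cmp' f g) = s' g"
proof -
  have "\<Psi> (r' (cmp' f g)) = \<Psi> (r' f)" "\<Psi> (s' (cmp' f g)) = \<Psi> (s' g)"
    using r_hom s_hom cmp_in_Mor'[OF fg] \<Phi>_cmp[OF fg] fg composable_image[OF fg]
      r_cmp[OF mor_into mor_into] s_cmp[OF mor_into mor_into] by simp_all
  then show ?thesis
    using inj_onD[OF inj_obj] r_hom s_hom cmp_in_Mor'[OF fg] fg by blast
qed

lemma cmp_assoc':
  assumes fgh: "f \<in> Mor'" "g \<in> Mor'" "h \<in> Mor'" "s' f = r' g" "s' g = r' h"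
  shows "cmp' (cmp' f g) h = cmp' f (cmp' g h)"
proof -
  have fg: "cmp' f g \<in> Mor'" "s' (cmp' f g) = r' h"
    and gh: "cmp' g h \<in> Mor'" "s' f = r' (cmp' g h)"
    using cmp_in_Mor' cmp_rs' fgh by simp_all
  have "\<Phi> (cmp' (cmp' f g) h) = \<Phi> (cmp' f (cmp' g h))"
    using \<Phi>_cmp[OF fg(1) fgh(3) fg(2)] \<Phi>_cmp[OF fgh(1) gh(1) gh(2)] \<Phi>_cmp fgh
      cmp_assoc[OF mor_into mor_into mor_into, OF fgh(1-3)] composable_image by simp
  then show ?thesis
    using inj_onD[OF inj_mor] cmp_in_Mor' fg gh fgh by blast
qed

lemma cmp_idm_left': "f \<in> Mor' \<Longrightarrow> cmp' (idm' (r' f)) f = f"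
  using inj_onD[OF inj_mor, of "cmp' (idm' (r' f)) f" f] \<Phi>_cmp[of "idm' (r' f)" f]
    cmp_in_Mor'[of "idm' (r' f)" f] idm_hom idm_rs' r_hom cmp_idm_left[OF mor_into]
  by simp

lemma cmp_idm_right': "f \<in> Mor' \<Longrightarrow> cmp' f (idm' (s' f)) = f"
  using inj_onD[OF inj_mor, of "cmp' f (idm' (s' f))" f] \<Phi>_cmp[of f "idm' (s' f)"]
    cmp_in_Mor'[of f "idm' (s' f)"] idm_hom idm_rs' s_hom cmp_idm_right[OF mor_into]
  by simp

theorem category_source: "category Ob' Mor' r' s' idm' cmp'"
  unfolding category_def
  using r_hom s_hom idm_hom idm_rs' cmp_in_Mor' cmp_rs' cmp_assoc' cmp_idm_left' cmp_idm_right'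
  by simp

end

subsection \<open>Factorisation in a k-graph\<close>

locale k_graph =
  fixes V :: "'v set" and L :: "'m set" and r s :: "'m \<Rightarrow> 'v" and idm :: "'v \<Rightarrow> 'm"
    and cmp :: "'m \<Rightarrow> 'm \<Rightarrow> 'm" and d :: "'m \<Rightarrow> ('k::finite \<Rightarrow> nat)"
  assumes kgraph: "kgraph V L r s idm cmp d"
begin

sublocale small_category V L r s idm cmp
  using kgraph by unfold_locales (simp add: kgraph_def)

lemma d_idm: "v \<in> V \<Longrightarrow> d (idm v) = 0"
  using kgraph by (simp add: kgraph_def)

lemma d_cmp: "f \<in> L \<Longrightarrow> g \<in> L \<Longrightarrow> s f = r g \<Longrightarrow> d (cmp f g) = d f + d g"
  using kgraph by (simp add: kgraph_def)

lemma unique_factorization: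
  "l \<in> L \<Longrightarrow> d l = m + n \<Longrightarrow>
    \<exists>!(f, g). f \<in> L \<and> g \<in> L \<and> s f = r g \<and> l = cmp f g \<and> d f = m \<and> d g = n"
  using kgraph unfolding kgraph_def by blast

lemma factorization_exists:
  assumes "l \<in> L" "d l = m + n"
  obtains f g where "f \<in> L" "g \<in> L" "s f = r g" "l = cmp f g" "d f = m" "d g = n"
  using unique_factorization[OF assms] that by auto

lemma factorization_unique:
  assumes fg: "f \<in> L" "g \<in> L" "s f = r g" and fg': "f' \<in> L" "g' \<in> L" "s f' = r g'"
    and eq: "cmp f g = cmp f' g'" and deg: "d f = d f'"
  shows "f = f' \<and> g = g'"
proof -
  have "d g' = d g"
    using d_cmp[OF fg] d_cmp[OF fg'] eq deg by simp
  note uniq = unique_factorization[OF cmp_in_Mor[OF fg] d_cmp[OF fg], unfolded ex1_iff_ex_Uniq]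
  have "(f, g) = (f', g')"
    by (rule Uniq_D[OF conjunct2[OF uniq]]) (use fg fg' eq deg \<open>d g' = d g\<close> in auto)
  then show ?thesis
    by simp
qed

lemma degree_zero_eq_idm: "l \<in> L \<Longrightarrow> d l = 0 \<Longrightarrow> l = idm (r l)"
  using factorization_unique[of "idm (r l)" l l "idm (s l)"]
  by (simp add: idm_in_Mor r_in_Ob s_in_Ob r_idm s_idm cmp_idm_left cmp_idm_right d_idm)

abbreviation factor :: "'m \<Rightarrow> ('k \<Rightarrow> nat) \<Rightarrow> ('k \<Rightarrow> nat) \<Rightarrow> 'm" where
  "factor \<equiv> seg L r s cmp d"

lemma factor_eqI:
  assumes L: "mu \<in> L" "nu \<in> L" "rho \<in> L" and st: "s mu = r nu" "s nu = r rho"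
    and w: "w = cmp (cmp mu nu) rho" and deg: "d mu = p" "d nu = q - p"
  shows "factor w p q = nu"
  unfolding seg_def
proof (rule the_equality)
  show "\<exists>mu rho. mu \<in> L \<and> nu \<in> L \<and> rho \<in> L \<and> s mu = r nu \<and> s nu = r rho \<and>
      w = cmp (cmp mu nu) rho \<and> d mu = p \<and> d nu = q - p"
    using assms by blast
next
  fix nu'
  assume "\<exists>mu' rho'. mu' \<in> L \<and> nu' \<in> L \<and> rho' \<in> L \<and> s mu' = r nu' \<and> s nu' = r rho' \<and>
      w = cmp (cmp mu' nu') rho' \<and> d mu' = p \<and> d nu' = q - p"
  then obtain mu' rho' where L': "mu' \<in> L" "nu' \<in> L" "rho' \<in> L"
    and st': "s mu' = r nu'" "s nu' = r rho'"
    and w': "w = cmp (cmp mu' nu') rho'" and deg': "d mu' = p" "d nu' = q - p"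
    by blast
  have "mu = mu' \<and> cmp nu rho = cmp nu' rho'"
    using L L' st st' w w' deg deg'
    by (intro factorization_unique) (simp_all add: cmp_in_Mor r_cmp cmp_assoc)
  then show "nu' = nu"
    using factorization_unique[of nu rho nu' rho'] L L' st st' deg deg' by simp
qed

lemma factor_exists:
  assumes "w \<in> L" "p \<le> q" "q \<le> d w"
  obtains mu nu rho where "mu \<in> L" "nu \<in> L" "rho \<in> L" "s mu = r nu" "s nu = r rho"
    "w = cmp (cmp mu nu) rho" "d mu = p" "d nu = q - p"
proof -
  obtain a rho where a: "a \<in> L" "rho \<in> L" "s a = r rho" "w = cmp a rho" "d a = q"
    using factorization_exists[OF assms(1), of q "d w - q"] assms(3) add_diff_inverse_fun by metis
  obtain mu nu where m: "mu \<in> L" "nu \<in> L" "s mu = r nu" "a = cmp mu nu" "d mu = p" "d nu = q - p"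
    using factorization_exists[OF a(1), of p "q - p"] assms(2) a(5) add_diff_inverse_fun by metis
  have "s nu = r rho"
    using a m s_cmp by metis
  then show ?thesis
    using that a m by blast
qed

lemma factor_in_L: "w \<in> L \<Longrightarrow> p \<le> q \<Longrightarrow> q \<le> d w \<Longrightarrow> factor w p q \<in> L"
  by (metis factor_exists factor_eqI)

lemma d_factor: "w \<in> L \<Longrightarrow> p \<le> q \<Longrightarrow> q \<le> d w \<Longrightarrow> d (factor w p q) = q - p"
  by (metis factor_exists factor_eqI)

lemma factor_cmp_factor:
  assumes w: "w \<in> L" and pqt: "p \<le> q" "q \<le> t" and t: "t \<le> d w"
  shows "s (factor w p q) = r (factor w q t) \<and> cmp (factor w p q) (factor w q t) = factor w p t"
proof -
  obtain mu N rho where D: "mu \<in> L" "N \<in> L" "rho \<in> L" "s mu = r N" "s N = r rho"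
      "w = cmp (cmp mu N) rho" "d mu = p" "d N = t - p"
    using factor_exists[OF w order_trans[OF pqt] t] by blast
  obtain a b where ab: "a \<in> L" "b \<in> L" "s a = r b" "N = cmp a b" "d a = q - p" "d b = t - q"
    using factorization_exists[OF D(2), of "q - p" "t - q"] D(8) diff_add_diff_fun[OF pqt] by metis
  have ra: "r a = r N" "s b = s N"
    using ab r_cmp s_cmp by metis+
  have ma: "cmp mu a \<in> L" "s (cmp mu a) = r b" "d (cmp mu a) = q"
    using D(1,4,7) ab ra(1) add_diff_inverse_fun[OF pqt(1)]
    by (simp_all add: cmp_in_Mor s_cmp d_cmp)
  have w2: "w = cmp (cmp (cmp mu a) b) rho"
    using D ab ra by (simp add: cmp_assoc)
  have w1: "w = cmp (cmp mu a) (cmp b rho)"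
    using w2 cmp_assoc[OF ma(1) ab(2) D(3) ma(2)] ra(2) D(5) by simp
  have sb: "s b = r rho"
    using ra(2) D(5) by simp
  have "factor w p q = a"
    by (rule factor_eqI[OF D(1) ab(1) cmp_in_Mor[OF ab(2) D(3) sb] _ _ w1 D(7) ab(5)])
      (use D(4) ra(1) ab(3) r_cmp[OF ab(2) D(3) sb] in simp_all)
  moreover have "factor w q t = b"
    by (rule factor_eqI[OF ma(1) ab(2) D(3) ma(2) sb w2 ma(3) ab(6)])
  moreover have "factor w p t = N"
    by (rule factor_eqI[OF D])
  ultimately show ?thesis
    using ab(3,4) by simp
qed

lemma factor_full: "w \<in> L \<Longrightarrow> factor w 0 (d w) = w"
  by (rule factor_eqI[of "idm (r w)" w "idm (s w)"])
    (simp_all add: idm_in_Mor r_in_Ob s_in_Ob r_idm s_idm cmp_idm_left cmp_idm_right d_idm)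

lemma factor_end: "w \<in> L \<Longrightarrow> factor w (d w) (d w) = idm (s w)"
  by (rule factor_eqI[of w "idm (s w)" "idm (s w)"])
    (simp_all add: idm_in_Mor r_in_Ob s_in_Ob r_idm s_idm cmp_idm_left cmp_idm_right d_idm)

lemma r_factor:
  assumes w: "w \<in> L" and pq: "p \<le> q" "q \<le> d w"
  shows "r (factor w p q) = r (factor w p p)"
proof -
  note c = factor_cmp_factor[OF w order_refl pq]
  have "r (cmp (factor w p p) (factor w p q)) = r (factor w p p)"
    using order_trans[OF pq] by (intro r_cmp factor_in_L[OF w] conjunct1[OF c] pq order_refl)
  with c show ?thesis
    by simp
qed

lemma s_factor: "w \<in> L \<Longrightarrow> p \<le> q \<Longrightarrow> q \<le> d w \<Longrightarrow> s (factor w p q) = r (factor w q q)"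
  using factor_cmp_factor[of w p q q] by simp

lemma factor_diag: "w \<in> L \<Longrightarrow> p \<le> d w \<Longrightarrow> factor w p p = idm (r (factor w p p))"
  by (simp add: degree_zero_eq_idm factor_in_L d_factor)

lemma factor_cmp_left:
  assumes uv: "u \<in> L" "v \<in> L" "s u = r v" and pq: "p \<le> q" "q \<le> d u"
  shows "factor (cmp u v) p q = factor u p q"
proof -
  obtain mu nu rho where D: "mu \<in> L" "nu \<in> L" "rho \<in> L" "s mu = r nu" "s nu = r rho"
      "u = cmp (cmp mu nu) rho" "d mu = p" "d nu = q - p"
    using factor_exists[OF uv(1) pq] by blast
  have mn: "cmp mu nu \<in> L" "s (cmp mu nu) = r rho"
    using cmp_in_Mor[OF D(1,2,4)] s_cmp[OF D(1,2,4)] D(5) by simp_all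
  have sr: "s rho = r v"
    using D(6) s_cmp[OF mn(1) D(3) mn(2)] uv(3) by simp
  have "cmp u v = cmp (cmp mu nu) (cmp rho v)"
    using D(6) cmp_assoc[OF mn(1) D(3) uv(2) mn(2) sr] by simp
  then have "factor (cmp u v) p q = nu"
    using D(4,5,7,8) r_cmp[OF D(3) uv(2) sr]
    by (intro factor_eqI[OF D(1,2) cmp_in_Mor[OF D(3) uv(2) sr]]) simp_all
  then show ?thesis
    using factor_eqI[OF D] by simp
qed

lemma factor_cmp_right:
  assumes uv: "u \<in> L" "v \<in> L" "s u = r v" and pq: "d u \<le> p" "p \<le> q" "q \<le> d u + d v"
  shows "factor (cmp u v) p q = factor v (p - d u) (q - d u)"
proof -
  have pq': "p - d u \<le> q - d u"
    using pq(2) by (auto simp: le_fun_def intro!: diff_le_mono)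
  have pq'': "q - d u \<le> d v"
    using pq(3) by (auto simp: le_fun_def le_diff_conv add.commute)
  obtain mu nu rho where D: "mu \<in> L" "nu \<in> L" "rho \<in> L" "s mu = r nu" "s nu = r rho"
      "v = cmp (cmp mu nu) rho" "d mu = p - d u" "d nu = (q - d u) - (p - d u)"
    using factor_exists[OF uv(2) pq' pq''] by blast
  have mn: "cmp mu nu \<in> L" "s (cmp mu nu) = r rho" "r (cmp mu nu) = r mu"
    using cmp_in_Mor[OF D(1,2,4)] s_cmp[OF D(1,2,4)] r_cmp[OF D(1,2,4)] D(5) by simp_all
  have su: "s u = r mu"
    using D(6) r_cmp[OF mn(1) D(3) mn(2)] mn(3) uv(3) by simp
  have "cmp u v = cmp (cmp u (cmp mu nu)) rho"
    using D(6) cmp_assoc[OF uv(1) mn(1) D(3)] mn su by simp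
  also have "cmp u (cmp mu nu) = cmp (cmp u mu) nu"
    using cmp_assoc[OF uv(1) D(1,2) su D(4)] by simp
  finally have w: "cmp u v = cmp (cmp (cmp u mu) nu) rho" .
  have "d (cmp u mu) = p"
    using d_cmp[OF uv(1) D(1) su] D(7) add_diff_inverse_fun[OF pq(1)] by simp
  moreover have "d nu = q - p"
    using D(8) pq(1,2) by (simp add: le_fun_def fun_eq_iff)
  ultimately have "factor (cmp u v) p q = nu"
    using D(4) s_cmp[OF uv(1) D(1) su]
    by (intro factor_eqI[OF cmp_in_Mor[OF uv(1) D(1) su] D(2,3) _ D(5) w]) simp_all
  then show ?thesis
    using factor_eqI[OF D] by simp
qed

lemma factor_cmp_across:
  assumes uv: "u \<in> L" "v \<in> L" "s u = r v" and ab: "a \<le> d u" "d u \<le> b" "b \<le> d u + d v"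
  shows "factor (cmp u v) a b = cmp (factor u a (d u)) (factor v 0 (b - d u))"
proof -
  have "factor (cmp u v) a b = cmp (factor (cmp u v) a (d u)) (factor (cmp u v) (d u) b)"
    using factor_cmp_factor[of "cmp u v" a "d u" b] uv ab by (simp add: cmp_in_Mor d_cmp)
  then show ?thesis
    using factor_cmp_left[OF uv ab(1) order_refl] factor_cmp_right[OF uv order_refl ab(2,3)] by simp
qed

end

subsection \<open>Shifting and prepending boundary paths\<close>

lemma enat_le_diff_iff: "enat p \<le> D \<Longrightarrow> enat b \<le> D - enat p \<longleftrightarrow> enat (b + p) \<le> D"
  by (cases D) auto

lemma enat_le_plus_iff: "enat b \<le> enat e + D \<longleftrightarrow> enat (b - e) \<le> D"
  by (cases D) auto

lemma enat_add_eq_of_eq_diff: "enat p \<le> D \<Longrightarrow> enat q = D - enat p \<Longrightarrow> enat (q + p) = D"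
  by (cases D) auto

lemma enat_diff_le_diff: "enat n \<le> D \<Longrightarrow> enat (n - p) \<le> D - enat p"
  by (cases D) auto

lemma leq_en_trans: "p \<le> q \<Longrightarrow> leq_en q D \<Longrightarrow> leq_en p D"
  unfolding leq_en_def le_fun_def by (meson enat_ord_simps(1) order_trans)

lemma leq_en_zero: "leq_en 0 D"
  unfolding leq_en_def by (simp add: zero_enat_def[symmetric])

lemma leq_en_shift_iff: "leq_en p D \<Longrightarrow> leq_en b (\<lambda>i. D i - enat (p i)) \<longleftrightarrow> leq_en (b + p) D"
  unfolding leq_en_def by (simp add: enat_le_diff_iff)

lemma leq_en_plus_iff: "leq_en b (\<lambda>i. enat (e i) + D i) \<longleftrightarrow> leq_en (b - e) D"
  unfolding leq_en_def by (simp add: enat_le_plus_iff)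

lemma in_Omega_diag: "leq_en p D \<Longrightarrow> in_Omega D p p"
  by (simp add: in_Omega_def)

lemma in_Omega_shift_iff:
  "leq_en p D \<Longrightarrow> in_Omega (\<lambda>i. D i - enat (p i)) a b \<longleftrightarrow> in_Omega D (a + p) (b + p)"
  unfolding in_Omega_def by (simp add: leq_en_shift_iff le_fun_def)

lemma fst_shift: "fst (shift p x) = (\<lambda>i. fst x i - enat (p i))"
  by (simp add: shift_def Let_def)

lemma snd_shift:
  "snd (shift p x) a b =
    (if in_Omega (\<lambda>i. fst x i - enat (p i)) a b then snd x (a + p) (b + p) else undefined)"
  by (simp add: shift_def Let_def)

lemma snd_shift_eq:
  "leq_en p (fst x) \<Longrightarrow> in_Omega (fst x) (a + p) (b + p) \<Longrightarrow> snd (shift p x) a b = snd x (a + p) (b + p)"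
  by (simp add: snd_shift in_Omega_shift_iff)

context k_graph
begin

abbreviation morph :: "('k, 'm) gpath \<Rightarrow> bool" where
  "morph \<equiv> graph_morphism V L r s idm cmp d"

abbreviation bpaths :: "('k, 'm) gpath set" where
  "bpaths \<equiv> boundary_paths V L r s idm cmp d"

lemma morph_in_L: "morph x \<Longrightarrow> in_Omega (fst x) p q \<Longrightarrow> snd x p q \<in> L"
  by (simp add: graph_morphism_def)

lemma d_morph: "morph x \<Longrightarrow> in_Omega (fst x) p q \<Longrightarrow> d (snd x p q) = q - p"
  by (simp add: graph_morphism_def)

lemma r_morph: "morph x \<Longrightarrow> in_Omega (fst x) p q \<Longrightarrow> r (snd x p q) = r (snd x p p)"
  by (simp add: graph_morphism_def)

lemma s_morph: "morph x \<Longrightarrow> in_Omega (fst x) p q \<Longrightarrow> s (snd x p q) = r (snd x q q)"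
  by (simp add: graph_morphism_def)

lemma morph_diag: "morph x \<Longrightarrow> leq_en p (fst x) \<Longrightarrow> snd x p p = idm (r (snd x p p))"
  by (simp add: graph_morphism_def)

lemma morph_cmp:
  "morph x \<Longrightarrow> p \<le> q \<Longrightarrow> in_Omega (fst x) q t \<Longrightarrow> cmp (snd x p q) (snd x q t) = snd x p t"
  by (simp add: graph_morphism_def)

lemma morph_factor:
  assumes x: "morph x" and abt: "a \<le> b" "b \<le> t" and t: "leq_en t (fst x)"
  shows "factor (snd x 0 t) a b = snd x a b"
proof -
  have b: "leq_en b (fst x)"
    using leq_en_trans[OF abt(2) t] .
  have \<Omega>: "in_Omega (fst x) 0 a" "in_Omega (fst x) a b" "in_Omega (fst x) b t"
    using abt t b leq_en_trans[OF abt(1) b] by (simp_all add: in_Omega_def)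
  have w: "snd x 0 t = cmp (cmp (snd x 0 a) (snd x a b)) (snd x b t)"
    using morph_cmp[OF x _ \<Omega>(2)] morph_cmp[OF x _ \<Omega>(3)] by simp
  have "d (snd x 0 a) = a"
    using d_morph[OF x \<Omega>(1)] by simp
  then show ?thesis
    using s_morph[OF x \<Omega>(1)] r_morph[OF x \<Omega>(2)] s_morph[OF x \<Omega>(2)] r_morph[OF x \<Omega>(3)]
    by (intro factor_eqI[OF morph_in_L[OF x \<Omega>(1)] morph_in_L[OF x \<Omega>(2)] morph_in_L[OF x \<Omega>(3)]
        _ _ w _ d_morph[OF x \<Omega>(2)]]) simp_all
qed

lemma bpaths_morph: "x \<in> bpaths \<Longrightarrow> morph x"
  by (simp add: boundary_paths_def)

lemma bpathsE:
  assumes "x \<in> bpaths"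
  obtains nx where "leq_en nx (fst x)"
    "\<And>p i. nx \<le> p \<Longrightarrow> leq_en p (fst x) \<Longrightarrow> enat (p i) = fst x i \<Longrightarrow>
       \<not> (\<exists>l\<in>L. r l = gvert r x p \<and> d l = ebasis i)"
  using assms that unfolding boundary_paths_def by blast

lemma bpathsI:
  assumes "morph x" "leq_en nx (fst x)"
    and "\<And>p i. nx \<le> p \<Longrightarrow> leq_en p (fst x) \<Longrightarrow> enat (p i) = fst x i \<Longrightarrow>
       \<not> (\<exists>l\<in>L. r l = gvert r x p \<and> d l = ebasis i)"
  shows "x \<in> bpaths"
  using assms unfolding boundary_paths_def by blast

lemma morph_shift:
  assumes x: "morph x" and p: "leq_en p (fst x)"
  shows "morph (shift p x)"
proof -
  let ?D = "\<lambda>i. fst x i - enat (p i)"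
  have S: "snd (shift p x) a b = snd x (a + p) (b + p)" if "in_Omega ?D a b" for a b
    using that by (simp add: snd_shift)
  have \<Omega>: "in_Omega ?D a b \<longleftrightarrow> in_Omega (fst x) (a + p) (b + p)" for a b
    using in_Omega_shift_iff[OF p] .
  have \<Omega>_diag: "in_Omega ?D a a \<and> in_Omega ?D b b" if "in_Omega ?D a b" for a b
    using that unfolding in_Omega_def by (meson leq_en_trans order_refl)
  show ?thesis
    unfolding graph_morphism_def fst_shift
  proof (intro conjI allI impI)
    fix a b
    assume "\<not> in_Omega ?D a b"
    then show "snd (shift p x) a b = undefined"
      by (simp add: snd_shift)
  next
    fix a b
    assume ab: "in_Omega ?D a b"
    note xab = ab[unfolded \<Omega>] and S_aa = S[of a a] and S_bb = S[of b b]
    show "snd (shift p x) a b \<in> L" "d (snd (shift p x) a b) = b - a"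
      "r (snd (shift p x) a b) = r (snd (shift p x) a a)"
      "s (snd (shift p x) a b) = r (snd (shift p x) b b)"
      using S[OF ab] S_aa S_bb \<Omega>_diag[OF ab] morph_in_L[OF x xab] d_morph[OF x xab]
        r_morph[OF x xab] s_morph[OF x xab]
      by (simp_all add: fun_eq_iff)
  next
    fix a
    assume "leq_en a ?D"
    then show "snd (shift p x) a a = idm (r (snd (shift p x) a a))"
      using S[of a a] morph_diag[OF x] leq_en_shift_iff[OF p] by (simp add: in_Omega_def)
  next
    fix a b t
    assume abt: "a \<le> b \<and> in_Omega ?D b t"
    then have "in_Omega ?D a b" "in_Omega ?D a t"
      unfolding in_Omega_def by (meson leq_en_trans order_trans)+
    moreover have "a + p \<le> b + p" "in_Omega (fst x) (b + p) (t + p)"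
      using abt \<Omega> by (auto simp: le_fun_def)
    ultimately show "cmp (snd (shift p x) a b) (snd (shift p x) b t) = snd (shift p x) a t"
      using S abt morph_cmp[OF x] by simp
  qed
qed

lemma shift_in_bpaths:
  assumes x: "x \<in> bpaths" and p: "leq_en p (fst x)"
  shows "shift p x \<in> bpaths"
proof -
  obtain nx where nx: "leq_en nx (fst x)"
    and maximal: "\<And>q i. nx \<le> q \<Longrightarrow> leq_en q (fst x) \<Longrightarrow> enat (q i) = fst x i \<Longrightarrow>
       \<not> (\<exists>l\<in>L. r l = gvert r x q \<and> d l = ebasis i)"
    using bpathsE[OF x] by blast
  show ?thesis
  proof (rule bpathsI[OF morph_shift[OF bpaths_morph[OF x] p], of "nx - p"])
    show "leq_en (nx - p) (fst (shift p x))"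
      using nx unfolding fst_shift leq_en_def by (simp add: enat_diff_le_diff)
  next
    fix q i
    assume q: "nx - p \<le> q" "leq_en q (fst (shift p x))" "enat (q i) = fst (shift p x) i"
    have "nx \<le> q + p"
      using q(1) by (simp add: le_fun_def le_diff_conv)
    moreover have "leq_en (q + p) (fst x)"
      using q(2) unfolding fst_shift leq_en_shift_iff[OF p] .
    moreover have "enat ((q + p) i) = fst x i"
      using p q(3) enat_add_eq_of_eq_diff by (simp add: leq_en_def fst_shift)
    moreover have "gvert r (shift p x) q = gvert r x (q + p)"
      using q(2) unfolding gvert_def snd_shift fst_shift by (simp add: in_Omega_def)
    ultimately show "\<not> (\<exists>l\<in>L. r l = gvert r (shift p x) q \<and> d l = ebasis i)"
      using maximal by simp
  qed
qed

abbreviation prep :: "'m \<Rightarrow> ('k, 'm) gpath \<Rightarrow> ('k, 'm) gpath" where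
  "prep \<equiv> prepend L r s cmp d"

lemma fst_prepend: "fst (prep l y) = (\<lambda>i. enat (d l i) + fst y i)"
  by (simp add: prepend_def Let_def)

lemma snd_prepend:
  "snd (prep l y) a b =
    (if in_Omega (fst (prep l y)) a b then factor (cmp l (snd y 0 (b - d l))) a b else undefined)"
proof -
  have "sup b (d l) - d l = b - d l"
    by (simp add: fun_eq_iff sup_nat_def max_def)
  then show ?thesis
    by (simp add: prepend_def Let_def)
qed

text \<open>The value of \<open>\<lambda>y\<close> on \<open>(a, b)\<close> is the segment \<open>(a, b)\<close> of the finite path \<open>\<lambda> y(0, b - d \<lambda>)\<close>.\<close>

context
  fixes l :: 'm and y :: "('k, 'm) gpath"
  assumes l: "l \<in> L" and y: "morph y" and sl: "s l = r (snd y 0 0)"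
begin

lemma in_Omega_prefix: "leq_en b (fst (prep l y)) \<Longrightarrow> in_Omega (fst y) 0 (b - d l)"
  by (simp add: in_Omega_def fst_prepend leq_en_plus_iff)

lemma s_eq_r_prefix: "leq_en b (fst (prep l y)) \<Longrightarrow> s l = r (snd y 0 (b - d l))"
  using r_morph[OF y in_Omega_prefix] sl by simp

lemma prefix_in_L: "leq_en b (fst (prep l y)) \<Longrightarrow> cmp l (snd y 0 (b - d l)) \<in> L"
  using cmp_in_Mor[OF l morph_in_L[OF y in_Omega_prefix] s_eq_r_prefix] .

lemma d_prefix: "leq_en b (fst (prep l y)) \<Longrightarrow> d (cmp l (snd y 0 (b - d l))) = d l + (b - d l)"
  using d_cmp[OF l morph_in_L[OF y in_Omega_prefix] s_eq_r_prefix] d_morph[OF y in_Omega_prefix]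
  by simp

lemma s_prefix:
  "leq_en b (fst (prep l y)) \<Longrightarrow> s (cmp l (snd y 0 (b - d l))) = r (snd y (b - d l) (b - d l))"
  using s_cmp[OF l morph_in_L[OF y in_Omega_prefix] s_eq_r_prefix] s_morph[OF y in_Omega_prefix]
  by simp

lemma factor_prefix_extend:
  assumes ab: "a \<le> b" and bt: "b \<le> t" and t: "leq_en t (fst (prep l y))"
  shows "factor (cmp l (snd y 0 (t - d l))) a b = factor (cmp l (snd y 0 (b - d l))) a b"
proof -
  have b: "leq_en b (fst (prep l y))"
    using leq_en_trans[OF bt t] .
  have \<Omega>: "in_Omega (fst y) (b - d l) (t - d l)"
    using t bt by (auto simp: in_Omega_def fst_prepend leq_en_plus_iff le_fun_def intro!: diff_le_mono)
  note y0b = morph_in_L[OF y in_Omega_prefix[OF b]]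
  note ybt = morph_in_L[OF y \<Omega>]
  have sy: "s (snd y 0 (b - d l)) = r (snd y (b - d l) (t - d l))"
    using s_morph[OF y in_Omega_prefix[OF b]] r_morph[OF y \<Omega>] by simp
  have "cmp l (snd y 0 (t - d l)) = cmp (cmp l (snd y 0 (b - d l))) (snd y (b - d l) (t - d l))"
    using morph_cmp[OF y _ \<Omega>] cmp_assoc[OF l y0b ybt s_eq_r_prefix[OF b] sy] by simp
  moreover have "s (cmp l (snd y 0 (b - d l))) = r (snd y (b - d l) (t - d l))"
    using s_prefix[OF b] r_morph[OF y \<Omega>] by simp
  moreover have "b \<le> d (cmp l (snd y 0 (b - d l)))"
    unfolding d_prefix[OF b] by (rule le_add_diff_fun)
  ultimately show ?thesis
    using factor_cmp_left[OF prefix_in_L[OF b] ybt _ ab] by simp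
qed

lemma morph_prepend: "morph (prep l y)"
proof -
  let ?D = "fst (prep l y)" and ?W = "\<lambda>b. cmp l (snd y 0 (b - d l))"
  have S: "snd (prep l y) a b = factor (?W b) a b" if "in_Omega ?D a b" for a b
    using that by (simp add: snd_prepend)
  have W: "?W b \<in> L" "b \<le> d (?W b)" if "leq_en b ?D" for b
    using that by (simp_all add: prefix_in_L d_prefix le_add_diff_fun)
  show ?thesis
    unfolding graph_morphism_def
  proof (intro conjI allI impI)
    fix a b
    assume "\<not> in_Omega ?D a b"
    then show "snd (prep l y) a b = undefined"
      by (simp add: snd_prepend)
  next
    fix a b
    assume ab: "in_Omega ?D a b"
    then have ab': "a \<le> b" "leq_en b ?D" and a: "leq_en a ?D"
      by (auto simp: in_Omega_def intro: leq_en_trans)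
    show "snd (prep l y) a b \<in> L" "d (snd (prep l y) a b) = b - a"
      using S[OF ab] factor_in_L d_factor W[OF ab'(2)] ab'(1) by simp_all
    show "r (snd (prep l y) a b) = r (snd (prep l y) a a)"
      using S[OF ab] S[of a a] a r_factor[OF W(1) ab'(1) W(2)] factor_prefix_extend[OF order_refl ab']
        ab' by (simp add: in_Omega_def)
    show "s (snd (prep l y) a b) = r (snd (prep l y) b b)"
      using S[OF ab] S[of b b] s_factor[OF W(1) ab'(1) W(2)] ab' by (simp add: in_Omega_def)
  next
    fix a
    assume a: "leq_en a ?D"
    then show "snd (prep l y) a a = idm (r (snd (prep l y) a a))"
      using S[of a a] factor_diag[OF W] by (simp add: in_Omega_def)
  next
    fix a b t
    assume "a \<le> b \<and> in_Omega ?D b t"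
    then have abt: "a \<le> b" "b \<le> t" "leq_en t ?D"
      by (auto simp: in_Omega_def)
    then have "in_Omega ?D a b" "in_Omega ?D a t" "in_Omega ?D b t"
      by (auto simp: in_Omega_def intro: leq_en_trans order_trans)
    then show "cmp (snd (prep l y) a b) (snd (prep l y) b t) = snd (prep l y) a t"
      using S factor_prefix_extend[OF abt] factor_cmp_factor[OF W(1) abt(1,2) W(2)] abt(3) by simp
  qed
qed

lemma snd_prepend_across:
  assumes a: "a \<le> d l" and b: "d l \<le> b" "leq_en b (fst (prep l y))"
  shows "snd (prep l y) a b = cmp (factor l a (d l)) (snd y 0 (b - d l))"
proof -
  note \<Omega> = in_Omega_prefix[OF b(2)]
  have "snd (prep l y) a b = factor (cmp l (snd y 0 (b - d l))) a b"
    using a b order_trans[OF a b(1)] by (simp add: snd_prepend in_Omega_def)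
  also have "\<dots> = cmp (factor l a (d l)) (factor (snd y 0 (b - d l)) 0 (b - d l))"
    using factor_cmp_across[OF l morph_in_L[OF y \<Omega>] s_eq_r_prefix[OF b(2)] a b(1)]
      d_morph[OF y \<Omega>] by (simp add: le_add_diff_fun)
  also have "factor (snd y 0 (b - d l)) 0 (b - d l) = snd y 0 (b - d l)"
    using factor_full[OF morph_in_L[OF y \<Omega>]] d_morph[OF y \<Omega>] by simp
  finally show ?thesis .
qed

lemma gvert_prepend:
  assumes b: "d l \<le> b" "leq_en b (fst (prep l y))"
  shows "gvert r (prep l y) b = gvert r y (b - d l)"
proof -
  let ?W = "cmp l (snd y 0 (b - d l))"
  have "d ?W = b"
    using d_prefix[OF b(2)] add_diff_inverse_fun[OF b(1)] by simp
  then have "snd (prep l y) b b = idm (s ?W)"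
    using b(2) factor_end[OF prefix_in_L[OF b(2)]] by (simp add: snd_prepend in_Omega_def)
  then show ?thesis
    using r_idm[OF s_in_Ob[OF prefix_in_L[OF b(2)]]] s_prefix[OF b(2)] by (simp add: gvert_def)
qed

end

lemma prepend_in_bpaths:
  assumes l: "l \<in> L" and y: "y \<in> bpaths" and sl: "s l = r (snd y 0 0)"
  shows "prep l y \<in> bpaths"
proof -
  obtain ny where ny: "leq_en ny (fst y)"
    and maximal: "\<And>q i. ny \<le> q \<Longrightarrow> leq_en q (fst y) \<Longrightarrow> enat (q i) = fst y i \<Longrightarrow>
       \<not> (\<exists>l\<in>L. r l = gvert r y q \<and> d l = ebasis i)"
    using bpathsE[OF y] by blast
  note y' = bpaths_morph[OF y]
  show ?thesis
  proof (rule bpathsI[OF morph_prepend[OF l y' sl], of "d l + ny"])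
    show "leq_en (d l + ny) (fst (prep l y))"
      using ny unfolding fst_prepend leq_en_plus_iff by simp
  next
    fix q i
    assume q: "d l + ny \<le> q" "leq_en q (fst (prep l y))" "enat (q i) = fst (prep l y) i"
    have "d l \<le> q"
      using q(1) order_trans le_add_self_fun by blast
    moreover have "ny \<le> q - d l"
    proof (rule le_funI)
      fix j
      have "d l j + ny j \<le> q j"
        using le_funD[OF q(1)] by simp
      then show "ny j \<le> (q - d l) j"
        by simp
    qed
    moreover have "leq_en (q - d l) (fst y)"
      using q(2) unfolding fst_prepend leq_en_plus_iff .
    moreover have "enat ((q - d l) i) = fst y i"
      using q(3) by (cases "fst y i") (auto simp: fst_prepend)
    ultimately show "\<not> (\<exists>l'\<in>L. r l' = gvert r (prep l y) q \<and> d l' = ebasis i)"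
      using maximal gvert_prepend[OF l y' sl _ q(2)] by simp
  qed
qed

end

subsection \<open>Coordinates\<close>

definition meet_coord :: "nat \<Rightarrow> enat \<Rightarrow> nat" where
  "meet_coord x D = (if enat x \<le> D then x else the_enat D)"

lemma meet_en_apply: "meet_en m D i = meet_coord (m i) (D i)"
  by (simp add: meet_en_def meet_coord_def)

lemma meet_coord_le_enat: "enat (meet_coord x D) \<le> D"
  by (cases D) (auto simp: meet_coord_def)

lemma meet_coord_le: "meet_coord x D \<le> x"
  by (cases D) (auto simp: meet_coord_def)

lemma le_meet_coord_iff: "x \<le> meet_coord x D \<longleftrightarrow> enat x \<le> D"
  by (cases D) (auto simp: meet_coord_def)

lemma meet_coord_mono: "x \<le> y \<Longrightarrow> meet_coord x D \<le> meet_coord y D"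
  by (cases D) (auto simp: meet_coord_def)

lemma meet_en_leq_en [simp]: "leq_en (meet_en m D) D"
  by (simp add: leq_en_def meet_en_apply meet_coord_le_enat)

lemma meet_en_le: "meet_en m D \<le> m"
  by (simp add: le_fun_def meet_en_apply meet_coord_le)

lemma meet_en_eq: "leq_en m D \<Longrightarrow> meet_en m D = m"
  by (simp add: leq_en_def meet_en_def fun_eq_iff)

lemma diff_meet_en_eq_0_iff: "m - meet_en m D = 0 \<longleftrightarrow> leq_en m D"
  by (simp add: leq_en_def fun_eq_iff meet_en_apply le_meet_coord_iff)

lemma meet_en_mono: "m \<le> n \<Longrightarrow> meet_en m D \<le> meet_en n D"
  by (simp add: le_fun_def meet_en_apply meet_coord_mono)

text \<open>The degree of \<open>\<lambda> \<sigma>\<^sup>m x\<close> is \<open>e + (D - m)\<close> with \<open>e = d \<lambda>\<close> and \<open>D = d x\<close>, coordinatewise.\<close>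

lemma meet_coord_prepend_shift:
  fixes m n e :: nat and D :: enat
  assumes "m \<le> n" "enat m \<le> D"
  shows "meet_coord (e + n - m) (enat e + (D - enat m)) = e + (meet_coord n D - m)"
    and "\<not> enat n \<le> D \<Longrightarrow> \<not> enat (e + n - m) \<le> enat e + (D - enat m)"
  using assms by (cases D; simp add: meet_coord_def)+

text \<open>The degree of \<open>x(0, n \<and> d x) \<sigma>\<^sup>p\<^sup>' y\<close> with \<open>p' = p \<and> d y\<close>, coordinatewise; the
  hypothesis says that either \<open>n \<le> D\<close> and \<open>p \<le> E\<close>, or both are exceeded and finite.\<close>

lemma meet_coord_concat:
  fixes m n p q :: nat and D E :: enat
  assumes mn: "m \<le> n" and pq: "p \<le> q" and K: "n - meet_coord n D = p - meet_coord p E"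
  defines "F \<equiv> enat (meet_coord n D) + (E - enat (meet_coord p E))"
  shows "meet_coord m F = meet_coord m D"
    and "meet_coord (n + q - p) F = meet_coord n D + (meet_coord q E - meet_coord p E)"
    and "\<not> enat n \<le> D \<Longrightarrow> \<not> enat (n + q - p) \<le> F"
proof -
  have C: "enat n \<le> D \<and> enat p \<le> E \<or> (\<exists>k j. D = enat k \<and> E = enat j \<and> k < n \<and> j < p)"
    using K by (cases D; cases E) (auto simp: meet_coord_def split: if_splits)
  show "meet_coord m F = meet_coord m D"
    using C mn unfolding F_def by (cases D; cases E) (auto simp: meet_coord_def)
  show "meet_coord (n + q - p) F = meet_coord n D + (meet_coord q E - meet_coord p E)"
    using C pq unfolding F_def by (cases D; cases E) (auto simp: meet_coord_def)
  show "\<not> enat n \<le> D \<Longrightarrow> \<not> enat (n + q - p) \<le> F"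
    using C pq unfolding F_def by (cases D; cases E) (auto simp: meet_coord_def)
qed

lemma meet_en_prepend_shift:
  fixes m n e :: "'a \<Rightarrow> nat" and D :: "'a \<Rightarrow> enat"
  assumes mn: "m \<le> n" and m: "leq_en m D"
  defines "F \<equiv> \<lambda>i. enat (e i) + (D i - enat (m i))"
  shows "meet_en (e + n - m) F = e + (meet_en n D - m)"
    and "\<not> leq_en n D \<Longrightarrow> \<not> leq_en (e + n - m) F"
proof -
  have i: "m i \<le> n i" "enat (m i) \<le> D i" for i
    using mn m by (auto simp: le_fun_def leq_en_def)
  show "meet_en (e + n - m) F = e + (meet_en n D - m)"
    unfolding F_def meet_en_apply fun_eq_iff using meet_coord_prepend_shift(1)[OF i] by simp
  show "\<not> leq_en n D \<Longrightarrow> \<not> leq_en (e + n - m) F"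
    unfolding F_def leq_en_def using meet_coord_prepend_shift(2)[OF i] by auto
qed

lemma meet_en_concat:
  assumes mn: "m \<le> n" and pq: "p \<le> q" and K: "n - meet_en n D = p - meet_en p E"
  defines "F \<equiv> \<lambda>i. enat (meet_en n D i) + (E i - enat (meet_en p E i))"
  shows "meet_en m F = meet_en m D"
    and "meet_en (n + q - p) F = meet_en n D + (meet_en q E - meet_en p E)"
    and "\<not> leq_en n D \<Longrightarrow> \<not> leq_en (n + q - p) F"
proof -
  have i: "m i \<le> n i" "p i \<le> q i" "n i - meet_coord (n i) (D i) = p i - meet_coord (p i) (E i)" for i
    using mn pq K by (auto simp: le_fun_def fun_eq_iff meet_en_apply)
  note c = meet_coord_concat[OF i]
  show "meet_en m F = meet_en m D"
    "meet_en (n + q - p) F = meet_en n D + (meet_en q E - meet_en p E)"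
    unfolding F_def fun_eq_iff meet_en_apply using c(1,2) by simp_all
  show "\<not> leq_en n D \<Longrightarrow> \<not> leq_en (n + q - p) F"
    unfolding F_def leq_en_def meet_en_apply using c(3) by auto
qed

definition pcoord ::
  "('k, 'm) gpath \<times> ('k \<Rightarrow> nat) \<times> ('k \<Rightarrow> nat) \<Rightarrow> 'm \<times> ('k \<Rightarrow> nat) \<times> ('k \<Rightarrow> nat)" where
  "pcoord = (\<lambda>(x, m, n).
     (snd x (meet_en m (fst x)) (meet_en n (fst x)), m - meet_en m (fst x), n - m))"

definition vcoord :: "('m \<Rightarrow> 'v) \<Rightarrow> ('k, 'm) gpath \<times> ('k \<Rightarrow> nat) \<Rightarrow> 'v \<times> ('k \<Rightarrow> nat)" where
  "vcoord r = (\<lambda>(x, m). (gvert r x (meet_en m (fst x)), m - meet_en m (fst x)))"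

lemma Prel_eq_kernel: "Prel B = {(e, e'). e \<in> Pset B \<and> e' \<in> Pset B \<and> pcoord e = pcoord e'}"
  unfolding Prel_def pcoord_def by (auto simp: Pset_def)

lemma Vrel_eq_kernel: "Vrel r B = {(e, e'). e \<in> Vset B \<and> e' \<in> Vset B \<and> vcoord r e = vcoord r e'}"
  unfolding Vrel_def vcoord_def by (auto simp: Vset_def)

lemma kernel_Image:
  "a \<in> A \<Longrightarrow> {(a, b). a \<in> A \<and> b \<in> A \<and> f a = f b} `` {a} = {b \<in> A. f b = f a}"
  by auto

lemma quotient_kernel: "A // {(a, b). a \<in> A \<and> b \<in> A \<and> f a = f b} = (\<lambda>t. {a \<in> A. f a = t}) ` f ` A"
proof -
  have "A // {(a, b). a \<in> A \<and> b \<in> A \<and> f a = f b} = (\<Union>a\<in>A. {{b \<in> A. f b = f a}})"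
    using kernel_Image[of _ A f] unfolding quotient_def by simp
  also have "\<dots> = (\<lambda>t. {a \<in> A. f a = t}) ` f ` A"
    by auto
  finally show ?thesis .
qed

lemma some_in_fibre: "t \<in> f ` A \<Longrightarrow> (SOME a. a \<in> {a \<in> A. f a = t}) \<in> {a \<in> A. f a = t}"
  by (rule someI_ex) blast

context k_graph
begin

definition coord_obj :: "('v \<times> ('k \<Rightarrow> nat)) set" where
  "coord_obj = V \<times> UNIV"

definition coord_mor :: "('m \<times> ('k \<Rightarrow> nat) \<times> ('k \<Rightarrow> nat)) set" where
  "coord_mor = {(\<alpha>, a, n). \<alpha> \<in> L \<and> d \<alpha> \<le> a + n}"

fun coord_r :: "'m \<times> ('k \<Rightarrow> nat) \<times> ('k \<Rightarrow> nat) \<Rightarrow> 'v \<times> ('k \<Rightarrow> nat)" where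
  "coord_r (\<alpha>, a, n) = (r \<alpha>, a)"

fun coord_s :: "'m \<times> ('k \<Rightarrow> nat) \<times> ('k \<Rightarrow> nat) \<Rightarrow> 'v \<times> ('k \<Rightarrow> nat)" where
  "coord_s (\<alpha>, a, n) = (s \<alpha>, a + n - d \<alpha>)"

fun coord_id :: "'v \<times> ('k \<Rightarrow> nat) \<Rightarrow> 'm \<times> ('k \<Rightarrow> nat) \<times> ('k \<Rightarrow> nat)" where
  "coord_id (v, b) = (idm v, b, 0)"

fun coord_cmp ::
  "'m \<times> ('k \<Rightarrow> nat) \<times> ('k \<Rightarrow> nat) \<Rightarrow> 'm \<times> ('k \<Rightarrow> nat) \<times> ('k \<Rightarrow> nat)
    \<Rightarrow> 'm \<times> ('k \<Rightarrow> nat) \<times> ('k \<Rightarrow> nat)" where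
  "coord_cmp (\<alpha>, a, n) (\<beta>, b, n') = (cmp \<alpha> \<beta>, a, n + n')"

lemma coord_cmp_closed:
  assumes "(\<alpha>, a, n) \<in> coord_mor" "(\<beta>, b, n') \<in> coord_mor" "coord_s (\<alpha>, a, n) = coord_r (\<beta>, b, n')"
  shows "coord_cmp (\<alpha>, a, n) (\<beta>, b, n') \<in> coord_mor
    \<and> coord_r (coord_cmp (\<alpha>, a, n) (\<beta>, b, n')) = coord_r (\<alpha>, a, n)
    \<and> coord_s (coord_cmp (\<alpha>, a, n) (\<beta>, b, n')) = coord_s (\<beta>, b, n')"
proof -
  have L: "\<alpha> \<in> L" "\<beta> \<in> L" and st: "s \<alpha> = r \<beta>" and b: "b = a + n - d \<alpha>"
    and deg: "d \<alpha> \<le> a + n" "d \<beta> \<le> b + n'"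
    using assms by (auto simp: coord_mor_def)
  have i: "d \<alpha> i \<le> a i + n i" "d \<beta> i \<le> a i + n i - d \<alpha> i + n' i" for i
    using deg unfolding b by (auto simp: le_fun_def)
  have "d \<alpha> + d \<beta> \<le> a + (n + n')"
  proof (rule le_funI)
    fix j
    show "(d \<alpha> + d \<beta>) j \<le> (a + (n + n')) j"
      using i[of j] by simp
  qed
  moreover have "a + (n + n') - (d \<alpha> + d \<beta>) = b + n' - d \<beta>"
  proof (rule ext)
    fix j
    show "(a + (n + n') - (d \<alpha> + d \<beta>)) j = (b + n' - d \<beta>) j"
      using i[of j] unfolding b by simp
  qed
  ultimately show ?thesis
    using L st by (simp add: coord_mor_def cmp_in_Mor d_cmp r_cmp s_cmp)
qed

lemma category_coord: "category coord_obj coord_mor coord_r coord_s coord_id coord_cmp"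
proof -
  have "\<forall>f\<in>coord_mor. coord_r f \<in> coord_obj \<and> coord_s f \<in> coord_obj"
    by (auto simp: coord_mor_def coord_obj_def r_in_Ob s_in_Ob)
  moreover have "\<forall>u\<in>coord_obj. coord_id u \<in> coord_mor \<and> coord_r (coord_id u) = u \<and> coord_s (coord_id u) = u"
    by (auto simp: coord_mor_def coord_obj_def idm_in_Mor r_idm s_idm d_idm)
  moreover have "\<forall>f\<in>coord_mor. \<forall>g\<in>coord_mor. coord_s f = coord_r g \<longrightarrow>
      coord_cmp f g \<in> coord_mor \<and> coord_r (coord_cmp f g) = coord_r f \<and> coord_s (coord_cmp f g) = coord_s g"
    using coord_cmp_closed by auto
  moreover have "\<forall>f\<in>coord_mor. \<forall>g\<in>coord_mor. \<forall>h\<in>coord_mor. coord_s f = coord_r g \<and> coord_s g = coord_r h \<longrightarrow>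
      coord_cmp (coord_cmp f g) h = coord_cmp f (coord_cmp g h)"
    by (auto simp: coord_mor_def cmp_assoc add.assoc)
  moreover have "\<forall>f\<in>coord_mor. coord_cmp (coord_id (coord_r f)) f = f \<and> coord_cmp f (coord_id (coord_s f)) = f"
    by (auto simp: coord_mor_def cmp_idm_left cmp_idm_right)
  ultimately show ?thesis
    unfolding category_def by blast
qed

abbreviation Pcoords :: "('m \<times> ('k \<Rightarrow> nat) \<times> ('k \<Rightarrow> nat)) set" where
  "Pcoords \<equiv> pcoord ` Pset bpaths"

abbreviation Vcoords :: "('v \<times> ('k \<Rightarrow> nat)) set" where
  "Vcoords \<equiv> vcoord r ` Vset bpaths"

abbreviation Pcls ::
  "'m \<times> ('k \<Rightarrow> nat) \<times> ('k \<Rightarrow> nat) \<Rightarrow> (('k, 'm) gpath \<times> ('k \<Rightarrow> nat) \<times> ('k \<Rightarrow> nat)) set" where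
  "Pcls t \<equiv> {e \<in> Pset bpaths. pcoord e = t}"

abbreviation Vcls :: "'v \<times> ('k \<Rightarrow> nat) \<Rightarrow> (('k, 'm) gpath \<times> ('k \<Rightarrow> nat)) set" where
  "Vcls u \<equiv> {e \<in> Vset bpaths. vcoord r e = u}"

lemma pclass_eq: "e \<in> Pset bpaths \<Longrightarrow> pclass V L r s idm cmp d e = Pcls (pcoord e)"
  unfolding pclass_def Prel_eq_kernel by (rule kernel_Image)

lemma vclass_eq: "e \<in> Vset bpaths \<Longrightarrow> vclass V L r s idm cmp d e = Vcls (vcoord r e)"
  unfolding vclass_def Vrel_eq_kernel by (rule kernel_Image)

lemma ext_mor_eq: "ext_mor V L r s idm cmp d = L <+> Pcls ` Pcoords"
  unfolding ext_mor_def Prel_eq_kernel quotient_kernel ..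

lemma ext_obj_eq: "ext_obj V L r s idm cmp d = V <+> Vcls ` Vcoords"
  unfolding ext_obj_def Vrel_eq_kernel quotient_kernel ..

lemma Pcls_rep:
  assumes "t \<in> Pcoords"
  obtains x m n where "(SOME e. e \<in> Pcls t) = (x, m, n)" "(x, m, n) \<in> Pset bpaths" "pcoord (x, m, n) = t"
  using some_in_fibre[OF assms] by (metis (mono_tags, lifting) mem_Collect_eq prod_cases3)

lemma Vcls_rep:
  assumes "u \<in> Vcoords"
  obtains x m where "(SOME e. e \<in> Vcls u) = (x, m)" "(x, m) \<in> Vset bpaths" "vcoord r (x, m) = u"
  using some_in_fibre[OF assms] by (metis (mono_tags, lifting) mem_Collect_eq surj_pair)

context
  fixes x :: "('k, 'm) gpath" and m n :: "'k \<Rightarrow> nat"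
  assumes rep: "(x, m, n) \<in> Pset bpaths"
begin

lemma rep_in_bpaths: "x \<in> bpaths"
  using rep by (simp add: Pset_def)

lemma rep_le: "m \<le> n"
  using rep by (simp add: Pset_def)

lemma rep_not_leq_en: "\<not> leq_en n (fst x)"
  using rep by (simp add: Pset_def)

lemma rep_in_Omega: "in_Omega (fst x) (meet_en m (fst x)) (meet_en n (fst x))"
  using meet_en_mono[OF rep_le] meet_en_leq_en by (simp add: in_Omega_def)

lemma rep_le_pointwise:
  "meet_en m (fst x) j \<le> m j" "meet_en n (fst x) j \<le> n j" "m j \<le> n j"
  "meet_en m (fst x) j \<le> meet_en n (fst x) j"
  using meet_en_le[of m "fst x"] meet_en_le[of n "fst x"] rep_le meet_en_mono[OF rep_le, of "fst x"]
  by (simp_all add: le_fun_def)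

lemma pcoord_in_coord_mor: "pcoord (x, m, n) \<in> coord_mor"
proof -
  note \<Omega> = rep_in_Omega and x = bpaths_morph[OF rep_in_bpaths]
  have "meet_en n (fst x) - meet_en m (fst x) \<le> m - meet_en m (fst x) + (n - m)"
  proof (rule le_funI)
    fix j
    show "(meet_en n (fst x) - meet_en m (fst x)) j \<le> (m - meet_en m (fst x) + (n - m)) j"
      using rep_le_pointwise[of j] by simp
  qed
  then show ?thesis
    using morph_in_L[OF x \<Omega>] d_morph[OF x \<Omega>] by (simp add: pcoord_def coord_mor_def)
qed

lemma coord_s_pcoord: "coord_s (pcoord (x, m, n)) = vcoord r (x, n)"
proof -
  note \<Omega> = rep_in_Omega and x = bpaths_morph[OF rep_in_bpaths]
  have "m - meet_en m (fst x) + (n - m) - (meet_en n (fst x) - meet_en m (fst x)) = n - meet_en n (fst x)"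
  proof (rule ext)
    fix j
    show "(m - meet_en m (fst x) + (n - m) - (meet_en n (fst x) - meet_en m (fst x))) j
        = (n - meet_en n (fst x)) j"
      using rep_le_pointwise[of j] by simp
  qed
  then show ?thesis
    using d_morph[OF x \<Omega>] s_morph[OF x \<Omega>] by (simp add: pcoord_def vcoord_def gvert_def)
qed

lemma coord_r_pcoord: "coord_r (pcoord (x, m, n)) = vcoord r (x, m)"
  using r_morph[OF bpaths_morph[OF rep_in_bpaths] rep_in_Omega]
  by (simp add: pcoord_def vcoord_def gvert_def)

end

lemma Pcoords_subset: "Pcoords \<subseteq> coord_mor"
  using pcoord_in_coord_mor by auto

lemma Vcoords_subset: "Vcoords \<subseteq> coord_obj"
proof
  fix u
  assume "u \<in> Vcoords"
  then obtain x m where xm: "(x, m) \<in> Vset bpaths" "u = vcoord r (x, m)"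
    by (metis imageE surj_pair)
  have "in_Omega (fst x) (meet_en m (fst x)) (meet_en m (fst x))"
    by (rule in_Omega_diag[OF meet_en_leq_en])
  then show "u \<in> coord_obj"
    using xm morph_in_L bpaths_morph r_in_Ob
    by (auto simp: Vset_def vcoord_def gvert_def coord_obj_def)
qed

lemma Vcoords_nonzero: "u \<in> Vcoords \<Longrightarrow> snd u \<noteq> 0"
  by (auto simp: Vset_def vcoord_def diff_meet_en_eq_0_iff)

lemma Pcoords_rep:
  assumes "t \<in> Pcoords"
  obtains x m n where "(x, m, n) \<in> Pset bpaths" "t = pcoord (x, m, n)"
proof -
  obtain e where "e \<in> Pset bpaths" "t = pcoord e"
    using assms by blast
  then show ?thesis
    using that by (cases e) auto
qed

lemma coord_s_Pcoords:
  assumes "t \<in> Pcoords"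
  shows "coord_s t \<in> Vcoords"
proof -
  obtain x m n where rep: "(x, m, n) \<in> Pset bpaths" and t: "t = pcoord (x, m, n)"
    using Pcoords_rep[OF assms] .
  have "(x, n) \<in> Vset bpaths"
    using rep_in_bpaths[OF rep] rep_not_leq_en[OF rep] by (simp add: Vset_def)
  then show ?thesis
    using coord_s_pcoord[OF rep] t by (simp add: rev_image_eqI)
qed

lemma coord_r_Pcoords:
  assumes "t \<in> Pcoords" and nonzero: "snd (coord_r t) \<noteq> 0"
  shows "coord_r t \<in> Vcoords"
proof -
  obtain x m n where rep: "(x, m, n) \<in> Pset bpaths" and t: "t = pcoord (x, m, n)"
    using Pcoords_rep[OF assms(1)] .
  have "\<not> leq_en m (fst x)"
    using nonzero coord_r_pcoord[OF rep] t by (simp add: vcoord_def diff_meet_en_eq_0_iff)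
  then have "(x, m) \<in> Vset bpaths"
    using rep_in_bpaths[OF rep] by (simp add: Vset_def)
  then show ?thesis
    using coord_r_pcoord[OF rep] t by (simp add: rev_image_eqI)
qed

context
  fixes x :: "('k, 'm) gpath" and m n :: "'k \<Rightarrow> nat" and l :: 'm
  assumes rep: "(x, m, n) \<in> Pset bpaths" and m: "leq_en m (fst x)"
    and l: "l \<in> L" and sl: "s l = gvert r x m"
begin

lemma s_eq_r_shift: "s l = r (snd (shift m x) 0 0)"
  using sl snd_shift_eq[OF m, of 0 0] m by (simp add: gvert_def in_Omega_def)

lemma meet_en_prepend_shift_path:
  "meet_en (d l + n - m) (fst (prep l (shift m x))) = d l + (meet_en n (fst x) - m)"
  using meet_en_prepend_shift(1)[OF rep_le[OF rep] m] by (simp add: fst_prepend fst_shift)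

lemma prepend_shift_in_Pset: "(prep l (shift m x), 0, d l + n - m) \<in> Pset bpaths"
  using prepend_in_bpaths[OF l shift_in_bpaths[OF rep_in_bpaths[OF rep] m] s_eq_r_shift]
    meet_en_prepend_shift(2)[OF rep_le[OF rep] m rep_not_leq_en[OF rep]]
  by (simp add: Pset_def fst_prepend fst_shift)

lemma pcoord_prepend_shift:
  "pcoord (prep l (shift m x), 0, d l + n - m) = coord_cmp (l, 0, d l) (pcoord (x, m, n))"
proof -
  let ?y = "shift m x" and ?n' = "meet_en n (fst x)"
  have mn': "m \<le> ?n'"
    using meet_en_mono[OF rep_le[OF rep], of "fst x"] meet_en_eq[OF m] by simp
  have b: "leq_en (d l + (?n' - m)) (fst (prep l ?y))"
    using meet_en_leq_en[of "d l + n - m"] meet_en_prepend_shift_path by metis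
  have \<Omega>: "in_Omega (fst x) (0 + m) (?n' - m + m)"
    using mn' by (simp add: in_Omega_def diff_add_inverse_fun)
  have "snd (prep l ?y) 0 (d l + (?n' - m)) = cmp (factor l 0 (d l)) (snd ?y 0 (d l + (?n' - m) - d l))"
    using shift_in_bpaths[OF rep_in_bpaths[OF rep] m]
    by (intro snd_prepend_across[OF l _ s_eq_r_shift _ le_add_self_fun b]) (simp_all add: bpaths_morph)
  also have "\<dots> = cmp l (snd x m ?n')"
    using factor_full[OF l] snd_shift_eq[OF m \<Omega>] by (simp add: diff_add_inverse_fun[OF mn'])
  finally have "snd (prep l ?y) 0 (d l + (?n' - m)) = cmp l (snd x m ?n')" .
  moreover note add_diff_assoc_fun[OF rep_le[OF rep], of "d l"]
  ultimately show ?thesis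
    using meet_en_prepend_shift_path meet_en_eq[OF m] by (simp add: pcoord_def meet_en_eq[OF leq_en_zero])
qed

end

definition concat_path :: "('k, 'm) gpath \<Rightarrow> ('k \<Rightarrow> nat) \<Rightarrow> ('k, 'm) gpath \<Rightarrow> ('k \<Rightarrow> nat) \<Rightarrow> ('k, 'm) gpath"
  where "concat_path x n y p = prep (snd x 0 (meet_en n (fst x))) (shift (meet_en p (fst y)) y)"

context
  fixes x y :: "('k, 'm) gpath" and m n p q :: "'k \<Rightarrow> nat"
  assumes rep_x: "(x, m, n) \<in> Pset bpaths" and rep_y: "(y, p, q) \<in> Pset bpaths"
    and match: "vcoord r (x, n) = vcoord r (y, p)"
begin

lemma concat_head:
  "snd x 0 (meet_en n (fst x)) \<in> L" "d (snd x 0 (meet_en n (fst x))) = meet_en n (fst x)"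
  "s (snd x 0 (meet_en n (fst x))) = r (snd (shift (meet_en p (fst y)) y) 0 0)"
proof -
  note x = bpaths_morph[OF rep_in_bpaths[OF rep_x]]
  have \<Omega>: "in_Omega (fst x) 0 (meet_en n (fst x))"
    by (simp add: in_Omega_def)
  show "snd x 0 (meet_en n (fst x)) \<in> L" "d (snd x 0 (meet_en n (fst x))) = meet_en n (fst x)"
    using morph_in_L[OF x \<Omega>] d_morph[OF x \<Omega>] by simp_all
  show "s (snd x 0 (meet_en n (fst x))) = r (snd (shift (meet_en p (fst y)) y) 0 0)"
    using s_morph[OF x \<Omega>] match snd_shift_eq[of "meet_en p (fst y)" y 0 0]
    by (simp add: vcoord_def gvert_def in_Omega_def)
qed

lemma shift_tail_in_bpaths: "shift (meet_en p (fst y)) y \<in> bpaths"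
  using shift_in_bpaths[OF rep_in_bpaths[OF rep_y] meet_en_leq_en] .

lemma fst_concat_path:
  "fst (concat_path x n y p) = (\<lambda>i. enat (meet_en n (fst x) i) + (fst y i - enat (meet_en p (fst y) i)))"
  by (simp add: concat_path_def fst_prepend fst_shift concat_head)

lemma meet_en_concat_path:
  "meet_en m (fst (concat_path x n y p)) = meet_en m (fst x)"
  "meet_en (n + q - p) (fst (concat_path x n y p))
    = meet_en n (fst x) + (meet_en q (fst y) - meet_en p (fst y))"
  "\<not> leq_en (n + q - p) (fst (concat_path x n y p))"
  using meet_en_concat[OF rep_le[OF rep_x] rep_le[OF rep_y]] match rep_not_leq_en[OF rep_x]
  by (simp_all add: fst_concat_path vcoord_def)

lemma concat_in_Pset: "(concat_path x n y p, m, n + q - p) \<in> Pset bpaths"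
proof -
  have "m \<le> n + q - p"
    using le_add_diff_of_le_fun[OF rep_le[OF rep_x] rep_le[OF rep_y]] .
  then show ?thesis
    using prepend_in_bpaths[OF concat_head(1) shift_tail_in_bpaths concat_head(3)] meet_en_concat_path(3)
    by (simp add: Pset_def concat_path_def)
qed

lemma pcoord_concat:
  "pcoord (concat_path x n y p, m, n + q - p) = coord_cmp (pcoord (x, m, n)) (pcoord (y, p, q))"
proof -
  let ?m' = "meet_en m (fst x)" and ?n' = "meet_en n (fst x)"
    and ?p' = "meet_en p (fst y)" and ?q' = "meet_en q (fst y)"
  let ?u = "snd x 0 ?n'" and ?w = "shift ?p' y"
  note x = bpaths_morph[OF rep_in_bpaths[OF rep_x]]
  have mn': "?m' \<le> ?n'" and pq': "?p' \<le> ?q'"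
    using meet_en_mono[OF rep_le[OF rep_x]] meet_en_mono[OF rep_le[OF rep_y]] by blast+
  have b: "leq_en (?n' + (?q' - ?p')) (fst (concat_path x n y p))"
    using meet_en_leq_en[of "n + q - p"] meet_en_concat_path(2) by metis
  have \<Omega>: "in_Omega (fst y) (0 + ?p') (?q' - ?p' + ?p')"
    using pq' by (simp add: in_Omega_def diff_add_inverse_fun)
  have "snd (concat_path x n y p) ?m' (?n' + (?q' - ?p'))
      = cmp (factor ?u ?m' (d ?u)) (snd ?w 0 (?n' + (?q' - ?p') - d ?u))"
    using mn' b concat_head(2) bpaths_morph[OF shift_tail_in_bpaths] unfolding concat_path_def
    by (intro snd_prepend_across[OF concat_head(1) _ concat_head(3)]) (simp_all add: le_add_self_fun)
  also have "\<dots> = cmp (snd x ?m' ?n') (snd y ?p' ?q')"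
    using morph_factor[OF x mn' order_refl meet_en_leq_en] snd_shift_eq[OF meet_en_leq_en \<Omega>] concat_head(2)
    by (simp add: diff_add_inverse_fun[OF pq'])
  finally have "snd (concat_path x n y p) ?m' (?n' + (?q' - ?p')) = cmp (snd x ?m' ?n') (snd y ?p' ?q')" .
  moreover note add_diff_diff_fun[OF rep_le[OF rep_x] rep_le[OF rep_y]]
  ultimately show ?thesis
    using meet_en_concat_path(1,2) by (simp add: pcoord_def)
qed

end

subsection \<open>The extension in coordinates\<close>

abbreviation Ob_ext :: "('v + (('k, 'm) gpath \<times> ('k \<Rightarrow> nat)) set) set" where
  "Ob_ext \<equiv> ext_obj V L r s idm cmp d"

abbreviation Mor_ext :: "('m + (('k, 'm) gpath \<times> ('k \<Rightarrow> nat) \<times> ('k \<Rightarrow> nat)) set) set" where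
  "Mor_ext \<equiv> ext_mor V L r s idm cmp d"

abbreviation r_ext ::
  "'m + (('k, 'm) gpath \<times> ('k \<Rightarrow> nat) \<times> ('k \<Rightarrow> nat)) set \<Rightarrow> 'v + (('k, 'm) gpath \<times> ('k \<Rightarrow> nat)) set" where
  "r_ext \<equiv> ext_r V L r s idm cmp d"

abbreviation s_ext ::
  "'m + (('k, 'm) gpath \<times> ('k \<Rightarrow> nat) \<times> ('k \<Rightarrow> nat)) set \<Rightarrow> 'v + (('k, 'm) gpath \<times> ('k \<Rightarrow> nat)) set" where
  "s_ext \<equiv> ext_s V L r s idm cmp d"

abbreviation id_ext ::
  "'v + (('k, 'm) gpath \<times> ('k \<Rightarrow> nat)) set \<Rightarrow> 'm + (('k, 'm) gpath \<times> ('k \<Rightarrow> nat) \<times> ('k \<Rightarrow> nat)) set" where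
  "id_ext \<equiv> ext_id V L r s idm cmp d"

abbreviation cmp_ext ::
  "'m + (('k, 'm) gpath \<times> ('k \<Rightarrow> nat) \<times> ('k \<Rightarrow> nat)) set
    \<Rightarrow> 'm + (('k, 'm) gpath \<times> ('k \<Rightarrow> nat) \<times> ('k \<Rightarrow> nat)) set
    \<Rightarrow> 'm + (('k, 'm) gpath \<times> ('k \<Rightarrow> nat) \<times> ('k \<Rightarrow> nat)) set" where
  "cmp_ext \<equiv> ext_comp V L r s idm cmp d"

lemma ext_r_Pcls:
  assumes "t \<in> Pcoords"
  shows "r_ext (Inr (Pcls t)) =
    (if snd (coord_r t) = 0 then Inl (fst (coord_r t)) else Inr (Vcls (coord_r t)))"
proof -
  obtain x m n where e: "(SOME e. e \<in> Pcls t) = (x, m, n)" and rep: "(x, m, n) \<in> Pset bpaths"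
    and t: "pcoord (x, m, n) = t"
    using Pcls_rep[OF assms] by blast
  have ct: "coord_r t = vcoord r (x, m)"
    using coord_r_pcoord[OF rep] t by simp
  show ?thesis
  proof (cases "leq_en m (fst x)")
    case True
    then show ?thesis
      using ct unfolding ext_r_def sum.case e by (simp add: vcoord_def meet_en_eq)
  next
    case False
    then have "(x, m) \<in> Vset bpaths"
      using rep_in_bpaths[OF rep] by (simp add: Vset_def)
    then show ?thesis
      using False ct unfolding ext_r_def sum.case e
      by (simp add: vclass_eq vcoord_def diff_meet_en_eq_0_iff)
  qed
qed

lemma ext_s_Pcls:
  assumes "t \<in> Pcoords"
  shows "s_ext (Inr (Pcls t)) = Inr (Vcls (coord_s t))"
proof -
  obtain x m n where e: "(SOME e. e \<in> Pcls t) = (x, m, n)" and rep: "(x, m, n) \<in> Pset bpaths"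
    and t: "pcoord (x, m, n) = t"
    using Pcls_rep[OF assms] by blast
  have "(x, n) \<in> Vset bpaths"
    using rep_in_bpaths[OF rep] rep_not_leq_en[OF rep] by (simp add: Vset_def)
  then show ?thesis
    using coord_s_pcoord[OF rep] t unfolding ext_s_def sum.case e by (simp add: vclass_eq)
qed

lemma ext_id_Vcls:
  assumes "u \<in> Vcoords"
  shows "id_ext (Inr (Vcls u)) = Inr (Pcls (coord_id u))" and "coord_id u \<in> Pcoords"
proof -
  obtain x m where e: "(SOME e. e \<in> Vcls u) = (x, m)" and rep: "(x, m) \<in> Vset bpaths"
    and u: "vcoord r (x, m) = u"
    using Vcls_rep[OF assms] by blast
  have P: "(x, m, m) \<in> Pset bpaths"
    using rep by (simp add: Vset_def Pset_def)
  have "pcoord (x, m, m) = coord_id u"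
    using u morph_diag[OF bpaths_morph meet_en_leq_en] rep
    by (auto simp: pcoord_def vcoord_def gvert_def Vset_def)
  then show "id_ext (Inr (Vcls u)) = Inr (Pcls (coord_id u))" "coord_id u \<in> Pcoords"
    using P unfolding ext_id_def sum.case e by (simp_all add: pclass_eq rev_image_eqI)
qed

lemma ext_comp_Inl_Pcls:
  assumes l: "l \<in> L" and t: "t \<in> Pcoords" and st: "(s l, 0) = coord_r t"
  shows "cmp_ext (Inl l) (Inr (Pcls t)) = Inr (Pcls (coord_cmp (l, 0, d l) t))"
    and "coord_cmp (l, 0, d l) t \<in> Pcoords"
proof -
  obtain x m n where e: "(SOME e. e \<in> Pcls t) = (x, m, n)" and rep: "(x, m, n) \<in> Pset bpaths"
    and t: "pcoord (x, m, n) = t"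
    using Pcls_rep[OF assms(2)] by blast
  have m: "leq_en m (fst x)" and sl: "s l = gvert r x m"
    using st coord_r_pcoord[OF rep] t by (simp_all add: vcoord_def diff_meet_en_eq_0_iff meet_en_eq)
  note z = prepend_shift_in_Pset[OF rep m l sl] pcoord_prepend_shift[OF rep m l sl]
  show "cmp_ext (Inl l) (Inr (Pcls t)) = Inr (Pcls (coord_cmp (l, 0, d l) t))"
    using z t unfolding ext_comp_def prod.case sum.case e by (simp add: pclass_eq)
  show "coord_cmp (l, 0, d l) t \<in> Pcoords"
    using z t by (metis rev_image_eqI)
qed

lemma ext_comp_Pcls_Pcls:
  assumes t: "t \<in> Pcoords" and t': "t' \<in> Pcoords" and st: "coord_s t = coord_r t'"
  shows "cmp_ext (Inr (Pcls t)) (Inr (Pcls t')) = Inr (Pcls (coord_cmp t t'))"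
    and "coord_cmp t t' \<in> Pcoords"
proof -
  obtain x m n where e: "(SOME e. e \<in> Pcls t) = (x, m, n)" and rep: "(x, m, n) \<in> Pset bpaths"
    and t: "pcoord (x, m, n) = t"
    using Pcls_rep[OF assms(1)] by blast
  obtain y p q where e': "(SOME e. e \<in> Pcls t') = (y, p, q)" and rep': "(y, p, q) \<in> Pset bpaths"
    and t': "pcoord (y, p, q) = t'"
    using Pcls_rep[OF assms(2)] by blast
  have "vcoord r (x, n) = vcoord r (y, p)"
    using st coord_s_pcoord[OF rep] coord_r_pcoord[OF rep'] t t' by simp
  note z = concat_in_Pset[OF rep rep' this] pcoord_concat[OF rep rep' this]
  show "cmp_ext (Inr (Pcls t)) (Inr (Pcls t')) = Inr (Pcls (coord_cmp t t'))"
    using z t t' unfolding ext_comp_def prod.case sum.case e e' by (simp add: pclass_eq concat_path_def)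
  show "coord_cmp t t' \<in> Pcoords"
    using z t t' by (metis rev_image_eqI)
qed

definition obj_coord :: "'v + (('k, 'm) gpath \<times> ('k \<Rightarrow> nat)) set \<Rightarrow> 'v \<times> ('k \<Rightarrow> nat)" where
  "obj_coord a = (case a of Inl v \<Rightarrow> (v, 0) | Inr C \<Rightarrow> vcoord r (SOME e. e \<in> C))"

definition mor_coord ::
  "'m + (('k, 'm) gpath \<times> ('k \<Rightarrow> nat) \<times> ('k \<Rightarrow> nat)) set \<Rightarrow> 'm \<times> ('k \<Rightarrow> nat) \<times> ('k \<Rightarrow> nat)" where
  "mor_coord f = (case f of Inl l \<Rightarrow> (l, 0, d l) | Inr C \<Rightarrow> pcoord (SOME e. e \<in> C))"

lemma obj_coord_Inl [simp]: "obj_coord (Inl v) = (v, 0)"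
  by (simp add: obj_coord_def)

lemma mor_coord_Inl [simp]: "mor_coord (Inl l) = (l, 0, d l)"
  by (simp add: mor_coord_def)

lemma obj_coord_Vcls: "u \<in> Vcoords \<Longrightarrow> obj_coord (Inr (Vcls u)) = u"
  using some_in_fibre[of u "vcoord r" "Vset bpaths"] by (simp add: obj_coord_def)

lemma mor_coord_Pcls: "t \<in> Pcoords \<Longrightarrow> mor_coord (Inr (Pcls t)) = t"
  using some_in_fibre[of t pcoord "Pset bpaths"] by (simp add: mor_coord_def)

lemma Ob_ext_cases:
  assumes "a \<in> Ob_ext"
  obtains v where "v \<in> V" "a = Inl v" | u where "u \<in> Vcoords" "a = Inr (Vcls u)"
  using assms unfolding ext_obj_eq by blast

lemma Mor_ext_cases:
  assumes "f \<in> Mor_ext"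
  obtains l where "l \<in> L" "f = Inl l" | t where "t \<in> Pcoords" "f = Inr (Pcls t)"
  using assms unfolding ext_mor_eq by blast

lemma coord_s_Pcoords_nonzero: "t \<in> Pcoords \<Longrightarrow> snd (coord_s t) \<noteq> 0"
  using Vcoords_nonzero coord_s_Pcoords by blast

lemma inj_on_obj_coord: "inj_on obj_coord Ob_ext"
proof (rule inj_onI)
  fix a a'
  assume "a \<in> Ob_ext" "a' \<in> Ob_ext" "obj_coord a = obj_coord a'"
  moreover have "(v, 0) \<noteq> u" "u \<noteq> (v, 0)" if "u \<in> Vcoords" for v u
    using Vcoords_nonzero[OF that] by auto
  ultimately show "a = a'"
    by (elim Ob_ext_cases) (simp_all add: obj_coord_Vcls)
qed

lemma inj_on_mor_coord: "inj_on mor_coord Mor_ext"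
proof (rule inj_onI)
  fix f f'
  assume "f \<in> Mor_ext" "f' \<in> Mor_ext" "mor_coord f = mor_coord f'"
  moreover have "(l, 0, d l) \<noteq> t" "t \<noteq> (l, 0, d l)" if "t \<in> Pcoords" for l t
    using coord_s_Pcoords_nonzero[OF that] by auto
  ultimately show "f = f'"
    by (elim Mor_ext_cases) (simp_all add: mor_coord_Pcls)
qed

lemma obj_coord_in_coord_obj:
  assumes "a \<in> Ob_ext"
  shows "obj_coord a \<in> coord_obj"
  using assms
proof (cases rule: Ob_ext_cases)
  case (1 v)
  then show ?thesis
    by (simp add: coord_obj_def)
next
  case (2 u)
  then show ?thesis
    using subsetD[OF Vcoords_subset 2(1)] by (simp add: obj_coord_Vcls)
qed

lemma mor_coord_in_coord_mor:
  assumes "f \<in> Mor_ext"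
  shows "mor_coord f \<in> coord_mor"
  using assms
proof (cases rule: Mor_ext_cases)
  case (1 l)
  then show ?thesis
    by (simp add: coord_mor_def)
next
  case (2 t)
  then show ?thesis
    using subsetD[OF Pcoords_subset 2(1)] by (simp add: mor_coord_Pcls)
qed

lemma ext_r_coord:
  assumes "f \<in> Mor_ext"
  shows "r_ext f \<in> Ob_ext \<and> obj_coord (r_ext f) = coord_r (mor_coord f)"
  using assms
proof (cases rule: Mor_ext_cases)
  case (1 l)
  then show ?thesis
    by (simp add: ext_r_def ext_obj_eq r_in_Ob)
next
  case (2 t)
  then show ?thesis
    using coord_r_Pcoords[OF 2(1)] mor_coord_in_coord_mor[OF assms]
    by (cases t) (auto simp: ext_r_Pcls ext_obj_eq obj_coord_Vcls mor_coord_Pcls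
        coord_mor_def r_in_Ob)
qed

lemma ext_s_coord:
  assumes "f \<in> Mor_ext"
  shows "s_ext f \<in> Ob_ext \<and> obj_coord (s_ext f) = coord_s (mor_coord f)"
  using assms
proof (cases rule: Mor_ext_cases)
  case (1 l)
  then show ?thesis
    by (simp add: ext_s_def ext_obj_eq s_in_Ob)
next
  case (2 t)
  then show ?thesis
    using coord_s_Pcoords[OF 2(1)] by (simp add: ext_s_Pcls ext_obj_eq obj_coord_Vcls mor_coord_Pcls)
qed

lemma ext_id_coord:
  assumes "a \<in> Ob_ext"
  shows "id_ext a \<in> Mor_ext \<and> mor_coord (id_ext a) = coord_id (obj_coord a)"
  using assms
proof (cases rule: Ob_ext_cases)
  case (1 v)
  then show ?thesis
    by (simp add: ext_id_def ext_mor_eq idm_in_Mor d_idm)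
next
  case (2 u)
  then show ?thesis
    using ext_id_Vcls[OF 2(1)] by (simp add: ext_mor_eq obj_coord_Vcls mor_coord_Pcls)
qed

lemma ext_comp_coord:
  assumes f: "f \<in> Mor_ext" and g: "g \<in> Mor_ext" and fg: "coord_s (mor_coord f) = coord_r (mor_coord g)"
  shows "cmp_ext f g \<in> Mor_ext \<and> mor_coord (cmp_ext f g) = coord_cmp (mor_coord f) (mor_coord g)"
  using f
proof (cases rule: Mor_ext_cases)
  case (1 l)
  note l = this
  show ?thesis
    using g
  proof (cases rule: Mor_ext_cases)
    case (1 l')
    then show ?thesis
      using l fg by (simp add: ext_comp_def ext_mor_eq cmp_in_Mor d_cmp)
  next
    case (2 t)
    then show ?thesis
      using l fg ext_comp_Inl_Pcls[OF l(1) 2(1)]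
      by (simp add: ext_mor_eq mor_coord_Pcls)
  qed
next
  case (2 t)
  note t = this
  show ?thesis
    using g
  proof (cases rule: Mor_ext_cases)
    case (1 l)
    then show ?thesis
      using t fg coord_s_Pcoords_nonzero[OF t(1)] by (simp add: mor_coord_Pcls)
  next
    case (2 t')
    then show ?thesis
      using t fg ext_comp_Pcls_Pcls[OF t(1) 2(1)] by (simp add: ext_mor_eq mor_coord_Pcls)
  qed
qed

end

theorem lemma3p21:
  fixes V :: "'v set" and L :: "'m set" and r s :: "'m \<Rightarrow> 'v" and idm :: "'v \<Rightarrow> 'm"
    and cmp :: "'m \<Rightarrow> 'm \<Rightarrow> 'm" and d :: "'m \<Rightarrow> ('k::finite \<Rightarrow> nat)"
  assumes "kgraph V L r s idm cmp d"
  shows "category (ext_obj V L r s idm cmp d) (ext_mor V L r s idm cmp d)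
           (ext_r V L r s idm cmp d) (ext_s V L r s idm cmp d)
           (ext_id V L r s idm cmp d) (ext_comp V L r s idm cmp d)"
proof -
  interpret k_graph V L r s idm cmp d
    by (rule k_graph.intro) (fact assms)
  interpret category_embedding coord_obj coord_mor coord_r coord_s coord_id coord_cmp
      obj_coord mor_coord Ob_ext Mor_ext r_ext s_ext id_ext cmp_ext
    by unfold_locales
      (rule category_coord inj_on_obj_coord inj_on_mor_coord obj_coord_in_coord_obj
        mor_coord_in_coord_mor ext_r_coord ext_s_coord ext_id_coord ext_comp_coord; assumption?)+
  show ?thesis
    by (rule category_source)
qed

end
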